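(* Let $G=H\oplus_3 K$ be a proper $3$-sum of $2$-connected cubic graphs $H$ and $K$ with distinguished vertices $u\in V(H)$ and $v\in V(K)$, where $\pi(H)\ge 5$, $K$ is $3$-edge-colourable, and $u$ is an apex of $H$. If $\pi(G)\ge 5$, then $K$ is quasi-bipartite and has a bipartising set $U$ such that $\{v\}$ is a component of $K-U$ (i.e. $v$ forms a trivial component of the quasi-partite set of $K$).
   Context: Graphs are finite; loops and multiple edges are allowed. The perfect matching index $\pi(G)$ of a bridgeless cubic graph is the smallest number of perfect matchings whose union is $E(G)$. A $3$-sum $H\oplus_3 K$ with distinguished vertices $u,v$ deletes $u$ and $v$ and joins the three dangling edge-ends formerly at $u$ bijectively to the three formerly at $v$; it is proper if neither $H$ nor $K$ is the $3$-dipole (two vertices joined by three parallel edges) and neither $u$ nor $v$ is incident with a pair of parallel edges. For a vertex $w$ of a $2$-connected cubic graph $X$ with no $3$-edge-colouring, $X^w$ denotes the graph obtained by inflating $w$ to a triangle (deleting $w$, adding a triangle on new vertices, attaching the three edge-ends formerly at $w$ to its three distinct vertices), and $w$ is an apex of $X$ if $\pi(X^w)=4$. A $2$-connected cubic graph $K$ is quasi-bipartite if it has an independent vertex set $U$ with $|U|\ge 2$ such that contracting each component of $K-U$ to a vertex yields a bipartite cubic graph (possibly with multiple edges) with partite sets $U$ and the set of contracted vertices; $U$ is a bipartising set and the components of $K-U$ form the quasi-partite set. *)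

theory Defs
  imports Main "HOL-Library.Multiset"
begin

text \<open>Finite multigraphs (loops and parallel edges allowed): every edge has a
  multiset of exactly two ends (a loop has the same end twice).\<close>

record ('v, 'e) mgraph =
  verts :: "'v set"
  edges :: "'e set"
  ends  :: "'e \<Rightarrow> 'v multiset"

definition wf_graph :: "('v, 'e) mgraph \<Rightarrow> bool" where
  "wf_graph G \<longleftrightarrow> finite (verts G) \<and> finite (edges G) \<and>
     (\<forall>e\<in>edges G. size (ends G e) = 2 \<and> set_mset (ends G e) \<subseteq> verts G)"

definition at :: "('v, 'e) mgraph \<Rightarrow> 'v \<Rightarrow> 'e set" where
  "at G x = {e \<in> edges G. x \<in># ends G e}"

text \<open>Degree: a loop counts twice.\<close>
definition deg :: "('v, 'e) mgraph \<Rightarrow> 'v \<Rightarrow> nat" where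
  "deg G x = (\<Sum>e\<in>edges G. count (ends G e) x)"

definition cubic :: "('v, 'e) mgraph \<Rightarrow> bool" where
  "cubic G \<longleftrightarrow> wf_graph G \<and> verts G \<noteq> {} \<and> (\<forall>x\<in>verts G. deg G x = 3)"

definition adj :: "('v, 'e) mgraph \<Rightarrow> 'v \<Rightarrow> 'v \<Rightarrow> bool" where
  "adj G x y \<longleftrightarrow> (\<exists>e\<in>edges G. ends G e = {#x, y#})"

definition reach :: "('v, 'e) mgraph \<Rightarrow> 'v \<Rightarrow> 'v \<Rightarrow> bool" where
  "reach G = (adj G)\<^sup>*\<^sup>*"

definition connected :: "('v, 'e) mgraph \<Rightarrow> bool" where
  "connected G \<longleftrightarrow> verts G \<noteq> {} \<and> (\<forall>x\<in>verts G. \<forall>y\<in>verts G. reach G x y)"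

definition del_edge :: "('v, 'e) mgraph \<Rightarrow> 'e \<Rightarrow> ('v, 'e) mgraph" where
  "del_edge G e = G\<lparr>edges := edges G - {e}\<rparr>"

definition del_verts :: "('v, 'e) mgraph \<Rightarrow> 'v set \<Rightarrow> ('v, 'e) mgraph" where
  "del_verts G U = \<lparr>verts = verts G - U,
                    edges = {e \<in> edges G. set_mset (ends G e) \<inter> U = {}},
                    ends = ends G\<rparr>"

definition two_connected :: "('v, 'e) mgraph \<Rightarrow> bool" where
  "two_connected G \<longleftrightarrow> connected G \<and> card (verts G) \<ge> 2 \<and>
     (\<forall>x\<in>verts G. connected (del_verts G {x})) \<and>
     (\<forall>e\<in>edges G. connected (del_edge G e))"

definition dipole3 :: "('v, 'e) mgraph \<Rightarrow> bool" where
  "dipole3 G \<longleftrightarrow> (\<exists>a b. a \<noteq> b \<and> verts G = {a, b} \<and> card (edges G) = 3 \<and>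
                     (\<forall>e\<in>edges G. ends G e = {#a, b#}))"

definition incident_parallel :: "('v, 'e) mgraph \<Rightarrow> 'v \<Rightarrow> bool" where
  "incident_parallel G x \<longleftrightarrow>
     (\<exists>e1\<in>edges G. \<exists>e2\<in>edges G. e1 \<noteq> e2 \<and> x \<in># ends G e1 \<and> ends G e1 = ends G e2)"

definition other :: "('v, 'e) mgraph \<Rightarrow> 'v \<Rightarrow> 'e \<Rightarrow> 'v" where
  "other G x e = (THE y. ends G e = {#x, y#})"

definition perfect_matching :: "('v, 'e) mgraph \<Rightarrow> 'e set \<Rightarrow> bool" where
  "perfect_matching G M \<longleftrightarrow> M \<subseteq> edges G \<and>
     (\<forall>e\<in>M. \<forall>x. count (ends G e) x \<le> 1) \<and>
     (\<forall>x\<in>verts G. card {e \<in> M. x \<in># ends G e} = 1)"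

definition pm_index :: "('v, 'e) mgraph \<Rightarrow> nat" where
  "pm_index G = (LEAST k. \<exists>Ms. length Ms = k \<and> (\<forall>M\<in>set Ms. perfect_matching G M) \<and>
                               \<Union>(set Ms) = edges G)"

definition colourable3 :: "('v, 'e) mgraph \<Rightarrow> bool" where
  "colourable3 G \<longleftrightarrow> (\<exists>c :: 'e \<Rightarrow> nat.
      (\<forall>e\<in>edges G. c e < 3) \<and>
      (\<forall>e\<in>edges G. \<forall>x. count (ends G e) x \<le> 1) \<and>
      (\<forall>e\<in>edges G. \<forall>e'\<in>edges G. e \<noteq> e' \<and> (\<exists>x. x \<in># ends G e \<and> x \<in># ends G e')
          \<longrightarrow> c e \<noteq> c e'))"

text \<open>3-sum H \<oplus>_3 K at u, v: the bijection phi maps the edges at u to the edges at v;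
  the edge e at u and phi e at v are joined into a single edge (represented by Inl e)
  between the other end of e in H and the other end of phi e in K.\<close>
definition sum3 :: "('v, 'e) mgraph \<Rightarrow> ('w, 'f) mgraph \<Rightarrow> 'v \<Rightarrow> 'w \<Rightarrow> ('e \<Rightarrow> 'f)
                     \<Rightarrow> ('v + 'w, 'e + 'f) mgraph" where
  "sum3 H K u v phi =
     \<lparr>verts = Inl ` (verts H - {u}) \<union> Inr ` (verts K - {v}),
      edges = Inl ` edges H \<union> Inr ` {f \<in> edges K. v \<notin># ends K f},
      ends = (\<lambda>d. case d of
                Inl e \<Rightarrow> (if u \<in># ends H e
                          then {# Inl (other H u e), Inr (other K v (phi e)) #}
                          else image_mset Inl (ends H e))
              | Inr f \<Rightarrow> image_mset Inr (ends K f))\<rparr>"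

text \<open>X^w: inflate w to a triangle. The new vertex Inr e carries the edge-end of e
  formerly at w; triangle edges are Inr {e1,e2}.\<close>
definition inflate :: "('v, 'e) mgraph \<Rightarrow> 'v \<Rightarrow> ('v + 'e, 'e + 'e set) mgraph" where
  "inflate X w =
     \<lparr>verts = Inl ` (verts X - {w}) \<union> Inr ` at X w,
      edges = Inl ` edges X \<union> Inr ` {{e1, e2} | e1 e2. e1 \<in> at X w \<and> e2 \<in> at X w \<and> e1 \<noteq> e2},
      ends = (\<lambda>d. case d of
                Inl e \<Rightarrow> (if w \<in># ends X e
                          then {# Inl (other X w e), Inr e #}
                          else image_mset Inl (ends X e))
              | Inr s \<Rightarrow> image_mset Inr (mset_set s))\<rparr>"

definition apex :: "('v, 'e) mgraph \<Rightarrow> 'v \<Rightarrow> bool" where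
  "apex X w \<longleftrightarrow> cubic X \<and> two_connected X \<and> \<not> colourable3 X \<and> w \<in> verts X \<and>
                pm_index (inflate X w) = 4"

definition comp_of :: "('v, 'e) mgraph \<Rightarrow> 'v \<Rightarrow> 'v set" where
  "comp_of G x = {y \<in> verts G. reach G x y}"

definition comps :: "('v, 'e) mgraph \<Rightarrow> 'v set set" where
  "comps G = comp_of G ` verts G"

definition independent :: "('v, 'e) mgraph \<Rightarrow> 'v set \<Rightarrow> bool" where
  "independent G U \<longleftrightarrow> U \<subseteq> verts G \<and> (\<forall>e\<in>edges G. \<not> set_mset (ends G e) \<subseteq> U)"

definition contract :: "('v, 'e) mgraph \<Rightarrow> 'v set \<Rightarrow> ('v + 'v set, 'e) mgraph" where
  "contract K U =
     \<lparr>verts = Inl ` U \<union> Inr ` comps (del_verts K U),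
      edges = {e \<in> edges K. \<not> (\<exists>C\<in>comps (del_verts K U). set_mset (ends K e) \<subseteq> C)},
      ends = (\<lambda>e. image_mset (\<lambda>x. if x \<in> U then Inl x else Inr (comp_of (del_verts K U) x))
                              (ends K e))\<rparr>"

definition bipartising_set :: "('v, 'e) mgraph \<Rightarrow> 'v set \<Rightarrow> bool" where
  "bipartising_set K U \<longleftrightarrow> independent K U \<and> card U \<ge> 2 \<and>
     cubic (contract K U) \<and>
     (\<forall>e\<in>edges (contract K U). \<exists>a\<in>U. \<exists>C\<in>comps (del_verts K U).
         ends (contract K U) e = {# Inl a, Inr C #})"

definition quasi_bipartite :: "('v, 'e) mgraph \<Rightarrow> bool" where
  "quasi_bipartite K \<longleftrightarrow> cubic K \<and> two_connected K \<and> (\<exists>U. bipartising_set K U)"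

end

(* Cover the inflated graph H^u by four perfect matchings. Each of them uses either all three
   spokes (the edges leaving the triangle) or a single spoke j together with the triangle edge
   opposite to it. If K - v - N(v) had a perfect matching P, completing the matchings of the first
   kind by P and those of the second kind by the colour class of phi j in a 3-edge-colouring of
   K - v would give four perfect matchings covering H (+)_3 K, contradicting pi >= 5. By Tutte's
   theorem there is thus a set S in K - v - N(v) whose removal leaves more than |S| odd components.
   Counting the boundary edges of S + N(v) + v in the cubic, 2-connected graph K shows that all
   the estimates are tight: U = S + N(v) is independent and each component of K - U, among them
   {v}, has exactly three boundary edges, so contracting them gives a cubic bipartite graph.
   Tutte's theorem, proved through Hall's theorem and a maximal barrier, also gives that every edge
   of a 2-connected cubic graph lies in a perfect matching, which makes pi(H^u) meaningful. *)

theory Submission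
  imports Defs
begin

section \<open>Components of a vertex set\<close>

definition induced :: "('a \<Rightarrow> 'a \<Rightarrow> bool) \<Rightarrow> 'a set \<Rightarrow> 'a \<Rightarrow> 'a \<Rightarrow> bool" where
  "induced E W a b \<longleftrightarrow> a \<in> W \<and> b \<in> W \<and> E a b"

definition component :: "('a \<Rightarrow> 'a \<Rightarrow> bool) \<Rightarrow> 'a set \<Rightarrow> 'a \<Rightarrow> 'a set" where
  "component E W x = {y \<in> W. (induced E W)\<^sup>*\<^sup>* x y}"

definition components :: "('a \<Rightarrow> 'a \<Rightarrow> bool) \<Rightarrow> 'a set \<Rightarrow> 'a set set" where
  "components E W = component E W ` W"

definition num_odd_components :: "('a \<Rightarrow> 'a \<Rightarrow> bool) \<Rightarrow> 'a set \<Rightarrow> nat" where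
  "num_odd_components E W = card {C \<in> components E W. odd (card C)}"

text \<open>A perfect matching of W in the relation E, given as the fixed-point-free involution
  sending each vertex to its partner.\<close>
definition perfect_matching_map :: "('a \<Rightarrow> 'a \<Rightarrow> bool) \<Rightarrow> 'a set \<Rightarrow> ('a \<Rightarrow> 'a) \<Rightarrow> bool" where
  "perfect_matching_map E W m \<longleftrightarrow> (\<forall>x\<in>W. m x \<in> W \<and> m x \<noteq> x \<and> m (m x) = x \<and> E x (m x))"

definition tutte_condition :: "('a \<Rightarrow> 'a \<Rightarrow> bool) \<Rightarrow> 'a set \<Rightarrow> bool" where
  "tutte_condition E W \<longleftrightarrow> (\<forall>S\<subseteq>W. num_odd_components E (W - S) \<le> card S)"

lemma induced_rtranclp_sym:
  assumes "symp E" "(induced E W)\<^sup>*\<^sup>* a b"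
  shows "(induced E W)\<^sup>*\<^sup>* b a"
proof -
  have "symp (induced E W)"
    using assms(1) by (auto simp: symp_def induced_def)
  then show ?thesis
    using assms(2) by (simp add: symp_rtranclp sympD)
qed

lemma component_subset: "component E W x \<subseteq> W"
  unfolding component_def by auto

lemma component_self: "x \<in> W \<Longrightarrow> x \<in> component E W x"
  unfolding component_def by auto

lemma component_eq:
  assumes "symp E" "y \<in> component E W x"
  shows "component E W y = component E W x"
proof -
  have "(induced E W)\<^sup>*\<^sup>* x y"
    using assms(2) unfolding component_def by auto
  moreover have "(induced E W)\<^sup>*\<^sup>* y x"
    using induced_rtranclp_sym[OF assms(1) calculation] .
  ultimately show ?thesis
    unfolding component_def by (auto intro: rtranclp_trans)
qed

lemma component_in_components: "x \<in> W \<Longrightarrow> component E W x \<in> components E W"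
  unfolding components_def by auto

lemma components_subset: "C \<in> components E W \<Longrightarrow> C \<subseteq> W"
  unfolding components_def using component_subset by fastforce

lemma components_nonempty: "C \<in> components E W \<Longrightarrow> C \<noteq> {}"
  unfolding components_def using component_self by fastforce

lemma finite_components: "finite W \<Longrightarrow> finite (components E W)"
  unfolding components_def by auto

lemma Union_components: "\<Union> (components E W) = W"
  unfolding components_def using component_subset component_self by fastforce

lemma components_eq_component:
  "symp E \<Longrightarrow> C \<in> components E W \<Longrightarrow> x \<in> C \<Longrightarrow> C = component E W x"
  unfolding components_def using component_eq by fastforce

lemma components_disjoint:
  assumes "symp E" "C \<in> components E W" "D \<in> components E W" "C \<noteq> D"
  shows "C \<inter> D = {}"
  using components_eq_component[OF assms(1)] assms(2-4) by blast

lemma components_closed: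
  assumes "symp E" "C \<in> components E W" "a \<in> C" "b \<in> W" "E a b"
  shows "b \<in> C"
proof -
  have "a \<in> W"
    using assms(2,3) components_subset by blast
  then have "(induced E W)\<^sup>*\<^sup>* a b"
    using assms(4,5) by (auto simp: induced_def)
  then show ?thesis
    using components_eq_component[OF assms(1-3)] assms(4) unfolding component_def by auto
qed

lemma component_restrict:
  assumes "A \<subseteq> W" "x \<in> A" "\<forall>a\<in>A. \<forall>b\<in>W. E a b \<longrightarrow> b \<in> A"
  shows "component E W x = component E A x"
proof
  have "(induced E A)\<^sup>*\<^sup>* x y \<Longrightarrow> (induced E W)\<^sup>*\<^sup>* x y" for y
    by (rule rtranclp_mono[THEN predicate2D]) (use assms(1) in \<open>auto simp: induced_def\<close>)
  then show "component E A x \<subseteq> component E W x"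
    using assms(1) unfolding component_def by auto
next
  have "(induced E W)\<^sup>*\<^sup>* x y \<Longrightarrow> y \<in> A \<and> (induced E A)\<^sup>*\<^sup>* x y" for y
  proof (induction rule: rtranclp_induct)
    case base
    then show ?case using assms(2) by auto
  next
    case (step y z)
    then have "z \<in> A"
      using assms(3) unfolding induced_def by blast
    with step show ?case
      by (auto simp: induced_def intro: rtranclp.rtrancl_into_rtrancl)
  qed
  then show "component E W x \<subseteq> component E A x"
    unfolding component_def by auto
qed

lemma component_of_component:
  assumes "symp E" "C \<in> components E W" "x \<in> C"
  shows "component E C x = C"
proof -
  have "component E W x = component E C x"
    by (rule component_restrict) (use assms components_subset components_closed in auto)
  then show ?thesis
    using components_eq_component[OF assms] by simp
qed

lemma components_Diff_subset:
  assumes sy: "symp E" and C: "C \<in> components E W" and D: "D \<subseteq> C"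
  shows "components E (W - D) = (components E W - {C}) \<union> components E (C - D)"
proof -
  have CW: "C \<subseteq> W"
    using C components_subset by auto
  have outside: "component E (W - D) y = component E W y" if y: "y \<in> W" "y \<notin> C" for y
  proof -
    let ?A = "component E W y"
    have A: "?A \<in> components E W" and yA: "y \<in> ?A"
      using component_in_components component_self y(1) by fast+
    have "?A \<inter> C = {}"
      using components_disjoint[OF sy A C] yA y(2) by blast
    then have "?A \<subseteq> W - D"
      using D component_subset[of E W y] by blast
    then have "component E (W - D) y = component E ?A y"
      using components_closed[OF sy A] yA by (intro component_restrict) auto
    then show ?thesis
      using component_of_component[OF sy A yA] by simp
  qed
  have inside: "component E (W - D) y = component E (C - D) y" if y: "y \<in> C - D" for y
    using components_closed[OF sy C] CW y by (intro component_restrict) auto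
  show ?thesis
  proof (intro equalityI subsetI)
    fix X assume "X \<in> components E (W - D)"
    then obtain y where y: "y \<in> W - D" "X = component E (W - D) y"
      unfolding components_def by auto
    show "X \<in> (components E W - {C}) \<union> components E (C - D)"
    proof (cases "y \<in> C")
      case True
      then show ?thesis
        using inside y component_in_components[of y "C - D" E] by auto
    next
      case False
      then have "X = component E W y" "X \<noteq> C"
        using outside y component_self[of y W E] by auto
      then show ?thesis
        using y component_in_components[of y W E] by auto
    qed
  next
    fix X assume X: "X \<in> (components E W - {C}) \<union> components E (C - D)"
    show "X \<in> components E (W - D)"
    proof (cases "X \<in> components E (C - D)")
      case True
      then obtain y where y: "y \<in> C - D" "X = component E (C - D) y"
        unfolding components_def by auto
      then show ?thesis
        using inside[OF y(1)] CW component_in_components[of y "W - D" E] by auto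
    next
      case False
      then have X1: "X \<in> components E W" "X \<noteq> C"
        using X by auto
      obtain y where y: "y \<in> X"
        using components_nonempty[OF X1(1)] by blast
      have "y \<in> W" "y \<notin> C"
        using X1 y components_subset components_disjoint[OF sy X1(1) C] by blast+
      then show ?thesis
        using outside components_eq_component[OF sy X1(1) y] D
          component_in_components[of y "W - D" E] by auto
    qed
  qed
qed

lemma even_sum_iff_even_card_odd:
  "finite F \<Longrightarrow> even (\<Sum>C\<in>F. f C :: nat) \<longleftrightarrow> even (card {C\<in>F. odd (f C)})"
proof (induction F rule: finite_induct)
  case (insert x F)
  have "{C \<in> insert x F. odd (f C)} =
      (if odd (f x) then insert x {C\<in>F. odd (f C)} else {C\<in>F. odd (f C)})"
    by auto
  with insert show ?case by auto
qed simp

lemma card_eq_sum_components: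
  assumes "symp E" "finite W"
  shows "card W = (\<Sum>C\<in>components E W. card C)"
proof -
  have "pairwise disjnt (components E W)"
    using components_disjoint[OF assms(1)] by (auto simp: pairwise_def disjnt_def)
  moreover have "finite C" if "C \<in> components E W" for C
    using finite_subset[OF components_subset[OF that] assms(2)] .
  ultimately show ?thesis
    using card_Union_disjoint[of "components E W"] Union_components[of E W] by simp
qed

lemma even_num_odd_components_iff:
  "symp E \<Longrightarrow> finite W \<Longrightarrow> even (num_odd_components E W) \<longleftrightarrow> even (card W)"
  using card_eq_sum_components even_sum_iff_even_card_odd[OF finite_components]
  unfolding num_odd_components_def by metis

lemma num_odd_components_Diff:
  assumes sy: "symp E" and fin: "finite W" and C: "C \<in> components E W" and D: "D \<subseteq> C"
  shows "num_odd_components E (W - D) + (if odd (card C) then 1 else 0)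
           = num_odd_components E W + num_odd_components E (C - D)"
proof -
  let ?odd = "\<lambda>F. {X \<in> F. odd (card X)}"
  have CW: "C \<subseteq> W"
    using C components_subset by auto
  have dis: "(components E W - {C}) \<inter> components E (C - D) = {}"
    using components_disjoint[OF sy _ C] components_subset components_nonempty by fastforce
  have f1: "finite (components E W)" and f2: "finite (components E (C - D))"
    using fin CW by (meson finite_Diff finite_components finite_subset)+
  have "num_odd_components E (W - D)
          = card (?odd (components E W) - {C}) + num_odd_components E (C - D)"
    unfolding num_odd_components_def components_Diff_subset[OF sy C D]
    using dis f1 f2 by (subst card_Un_disjoint[symmetric]) (auto intro: arg_cong[where f = card])
  moreover have "card (?odd (components E W) - {C}) + (if odd (card C) then 1 else 0)
                   = num_odd_components E W"
  proof (cases "odd (card C)")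
    case True
    then have "C \<in> ?odd (components E W)" using C by simp
    moreover have "finite (?odd (components E W))"
      using f1 by simp
    ultimately have "card (?odd (components E W) - {C}) + 1 = card (?odd (components E W))"
      using card_Suc_Diff1 by fastforce
    then show ?thesis
      unfolding num_odd_components_def using True by simp
  next
    case False
    then have "?odd (components E W) - {C} = ?odd (components E W)" by auto
    then show ?thesis
      unfolding num_odd_components_def using False by simp
  qed
  ultimately show ?thesis
    by linarith
qed

section \<open>Hall's and Tutte's theorems\<close>

definition hall_condition :: "('a \<Rightarrow> 'b set) \<Rightarrow> 'a set \<Rightarrow> bool" where
  "hall_condition N A \<longleftrightarrow> (\<forall>X\<subseteq>A. card X \<le> card (\<Union>(N ` X)))"

lemma hall_conditionD: "hall_condition N A \<Longrightarrow> X \<subseteq> A \<Longrightarrow> card X \<le> card (\<Union>(N ` X))"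
  unfolding hall_condition_def by blast

lemma hall_condition_Diff_tight:
  assumes hall: "hall_condition N A" and fin: "finite A" "\<forall>a\<in>A. finite (N a)"
    and X: "X \<subseteq> A" and tight: "card (\<Union>(N ` X)) = card X"
  shows "hall_condition (\<lambda>a. N a - \<Union>(N ` X)) (A - X)"
  unfolding hall_condition_def
proof (intro allI impI)
  fix Y assume Y: "Y \<subseteq> A - X"
  let ?R = "\<Union>(N ` X)" and ?N' = "\<lambda>a. N a - \<Union>(N ` X)"
  have finY: "finite Y"
    using Y by (intro finite_subset[OF _ fin(1)]) blast
  have finX: "finite X"
    using X by (intro finite_subset[OF _ fin(1)])
  have disj: "Y \<inter> X = {}" and YX: "Y \<union> X \<subseteq> A"
    using Y X by auto
  have "card Y + card X = card (Y \<union> X)"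
    using card_Un_disjoint[OF finY finX disj] by simp
  also have "\<dots> \<le> card (\<Union>(N ` (Y \<union> X)))"
    using hall_conditionD[OF hall YX] .
  also have "\<Union>(N ` (Y \<union> X)) = \<Union>(?N' ` Y) \<union> ?R"
    by auto
  also have "card (\<Union>(?N' ` Y) \<union> ?R) \<le> card (\<Union>(?N' ` Y)) + card X"
    using card_Un_le[of "\<Union>(?N' ` Y)" ?R] tight by simp
  finally show "card Y \<le> card (\<Union>(?N' ` Y))"
    by simp
qed

lemma hall_condition_remove:
  assumes fin: "finite A" "\<forall>a\<in>A. finite (N a)" and a: "a \<in> A"
    and surplus: "\<forall>X\<subseteq>A. X \<noteq> {} \<longrightarrow> X \<noteq> A \<longrightarrow> card X < card (\<Union>(N ` X))"
  shows "hall_condition (\<lambda>x. N x - {b}) (A - {a})"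
  unfolding hall_condition_def
proof (intro allI impI)
  fix Y assume Y: "Y \<subseteq> A - {a}"
  show "card Y \<le> card (\<Union>x\<in>Y. N x - {b})"
  proof (cases "Y = {}")
    case False
    have "finite Y"
      using Y by (intro finite_subset[OF _ fin(1)]) blast
    then have fin_NY: "finite (\<Union>(N ` Y))"
      using fin Y by (intro finite_UN_I) auto
    have "card (\<Union>(N ` Y)) \<le> card (\<Union>(N ` Y) - {b}) + 1"
    proof (cases "b \<in> \<Union>(N ` Y)")
      case True
      then show ?thesis
        using card.remove[OF fin_NY True] by linarith
    qed simp
    moreover have "card Y < card (\<Union>(N ` Y))"
      using surplus False Y a by blast
    ultimately have "card Y \<le> card (\<Union>(N ` Y) - {b})"
      by linarith
    moreover have "(\<Union>x\<in>Y. N x - {b}) = \<Union>(N ` Y) - {b}"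
      by auto
    ultimately show ?thesis
      by simp
  qed simp
qed

theorem hall_marriage:
  assumes "finite A" "\<forall>a\<in>A. finite (N a)" "hall_condition N A"
  shows "\<exists>f. inj_on f A \<and> (\<forall>a\<in>A. f a \<in> N a)"
  using assms
proof (induction "card A" arbitrary: A N rule: less_induct)
  case less
  note fin = less.prems(1,2) and hall = less.prems(3)
  show ?case
  proof (cases "\<exists>X. X \<subseteq> A \<and> X \<noteq> {} \<and> X \<noteq> A \<and> card (\<Union>(N ` X)) = card X")
    case True
    then obtain X where X: "X \<subseteq> A" "X \<noteq> {}" "X \<noteq> A" "card (\<Union>(N ` X)) = card X"
      by blast
    have finX: "finite X"
      using finite_subset[OF X(1) fin(1)] .
    have cX: "card X < card A"
      using X(1,3) fin(1) by (meson psubsetI psubset_card_mono)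
    have "card X > 0"
      using finX X(2) by (simp add: card_gt_0_iff)
    then have cAX: "card (A - X) < card A"
      using card_Diff_subset[OF finX X(1)] card_mono[OF fin(1) X(1)] by linarith
    have "hall_condition N X"
      using hall X(1) unfolding hall_condition_def by blast
    then obtain f1 where f1: "inj_on f1 X" "\<forall>a\<in>X. f1 a \<in> N a"
      using less.hyps[OF cX finX] fin(2) X(1) by blast
    obtain f2 where f2: "inj_on f2 (A - X)" "\<forall>a\<in>A - X. f2 a \<in> N a - \<Union>(N ` X)"
      using less.hyps[OF cAX finite_Diff[OF fin(1)] _ hall_condition_Diff_tight[OF hall fin X(1,4)]]
        fin(2) by blast
    have "f1 ` X \<subseteq> \<Union>(N ` X)" "f2 ` (A - X) \<inter> \<Union>(N ` X) = {}"
      using f1(2) f2(2) by auto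
    then have "f1 ` X \<inter> f2 ` (A - X) = {}"
      by blast
    then have "inj_on (\<lambda>a. if a \<in> X then f1 a else f2 a) (X \<union> (A - X))"
      by (rule inj_on_disjoint_Un[OF f1(1) f2(1)])
    moreover have "X \<union> (A - X) = A"
      using X(1) by blast
    ultimately show ?thesis
      using f1(2) f2(2) by (intro exI[of _ "\<lambda>a. if a \<in> X then f1 a else f2 a"]) auto
  next
    case False
    have surplus: "\<forall>X\<subseteq>A. X \<noteq> {} \<longrightarrow> X \<noteq> A \<longrightarrow> card X < card (\<Union>(N ` X))"
    proof (intro allI impI)
      fix X assume "X \<subseteq> A" "X \<noteq> {}" "X \<noteq> A"
      then have "card X \<le> card (\<Union>(N ` X))" "card (\<Union>(N ` X)) \<noteq> card X"
        using hall False unfolding hall_condition_def by auto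
      then show "card X < card (\<Union>(N ` X))"
        by linarith
    qed
    show ?thesis
    proof (cases "A = {}")
      case False
      then obtain a where a: "a \<in> A"
        by blast
      have "card {a} \<le> card (N a)"
        using hall_conditionD[OF hall, of "{a}"] a by simp
      then have "N a \<noteq> {}"
        by auto
      then obtain b where b: "b \<in> N a"
        by blast
      obtain f where f: "inj_on f (A - {a})" "\<forall>x\<in>A - {a}. f x \<in> N x - {b}"
        using less.hyps[OF card_Diff1_less[OF fin(1) a] finite_Diff[OF fin(1)] _
            hall_condition_remove[OF fin a surplus]] fin(2) by blast
      have "(\<lambda>_. b) ` {a} \<inter> f ` (A - {a}) = {}"
        using f(2) by blast
      then have "inj_on (\<lambda>x. if x \<in> {a} then b else f x) ({a} \<union> (A - {a}))"
        using inj_on_disjoint_Un[of "\<lambda>_. b" "{a}" f "A - {a}"] f(1) by simp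
      moreover have "{a} \<union> (A - {a}) = A"
        using a by blast
      ultimately show ?thesis
        using b f(2) by (intro exI[of _ "\<lambda>x. if x \<in> {a} then b else f x"]) auto
    qed simp
  qed
qed

lemma perfect_matching_map_glue:
  assumes sym: "symp E" and S: "S \<subseteq> W" and f: "bij_betw f (components E (W - S)) S"
    and y: "\<forall>C\<in>components E (W - S). y C \<in> C \<and> E (f C) (y C) \<and>
                                       perfect_matching_map E (C - {y C}) (mc C)"
  shows "\<exists>m. perfect_matching_map E W m"
proof -
  let ?cs = "components E (W - S)" and ?C = "component E (W - S)"
  define g where "g = inv_into ?cs f"
  define m where "m z = (if z \<in> S then y (g z) else if z = y (?C z) then f (?C z)
                          else mc (?C z) z)" for z
  have "m z \<in> W \<and> m z \<noteq> z \<and> m (m z) = z \<and> E z (m z)" if z: "z \<in> W" for z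
  proof (cases "z \<in> S")
    case True
    let ?D = "g z"
    have D: "?D \<in> ?cs" and fD: "f ?D = z"
      unfolding g_def using True f by (auto simp: bij_betw_def intro: inv_into_into f_inv_into_f)
    have yD: "y ?D \<in> ?D" "E z (y ?D)"
      using y D fD by auto
    then have "y ?D \<in> W - S" "?C (y ?D) = ?D"
      using D components_subset components_eq_component[OF sym D] by blast+
    moreover have "E (y ?D) z"
      using sympD[OF sym yD(2)] .
    ultimately show ?thesis
      unfolding m_def using True fD yD by auto
  next
    case False
    then have zX: "z \<in> W - S"
      using z by blast
    have D: "?C z \<in> ?cs"
      using component_in_components[OF zX] .
    show ?thesis
    proof (cases "z = y (?C z)")
      case True
      have fS: "f (?C z) \<in> S" and "g (f (?C z)) = ?C z"
        using f D unfolding g_def bij_betw_def by (auto intro: inv_into_f_f)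
      then have "m (f (?C z)) = z"
        unfolding m_def using True by simp
      moreover have "E (f (?C z)) z"
        using y D True by metis
      then have "E z (f (?C z))"
        by (rule sympD[OF sym])
      ultimately show ?thesis
        unfolding m_def using False True fS S by auto
    next
      case nyc: False
      then have "z \<in> ?C z - {y (?C z)}"
        using component_self[OF zX] by blast
      then have pz: "mc (?C z) z \<in> ?C z - {y (?C z)}" "mc (?C z) z \<noteq> z"
          "mc (?C z) (mc (?C z) z) = z" "E z (mc (?C z) z)"
        using y D unfolding perfect_matching_map_def by auto
      have "mc (?C z) z \<in> W - S" "?C (mc (?C z) z) = ?C z"
        using pz(1) component_subset component_eq[OF sym] by fastforce+
      then show ?thesis
        unfolding m_def using False nyc pz by auto
    qed
  qed
  then show ?thesis
    unfolding perfect_matching_map_def by blast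
qed

lemma tutte_conditionD:
  "tutte_condition E W \<Longrightarrow> S \<subseteq> W \<Longrightarrow> num_odd_components E (W - S) \<le> card S"
  unfolding tutte_condition_def by blast

locale tutte_max_barrier =
  fixes E :: "'a \<Rightarrow> 'a \<Rightarrow> bool" and W S :: "'a set"
  assumes sym: "symp E" and fin: "finite W" and tutte: "tutte_condition E W"
    and barrier: "S \<subseteq> W" "num_odd_components E (W - S) = card S"
    and maximal: "\<And>S'. S' \<subseteq> W \<Longrightarrow> num_odd_components E (W - S') = card S' \<Longrightarrow> card S' \<le> card S"
begin

lemma finite_barrier: "finite S"
  using finite_subset[OF barrier(1) fin] .

lemma no_larger_barrier:
  assumes C: "C \<in> components E (W - S)" and D: "D \<subseteq> C" "D \<noteq> {}"
  shows "num_odd_components E (W - S - D) < card S + card D"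
proof (rule ccontr)
  assume big: "\<not> ?thesis"
  have DW: "D \<subseteq> W - S"
    using D components_subset[OF C] by blast
  then have fD: "finite D"
    using finite_subset[OF _ finite_Diff[OF fin]] by blast
  have cSD: "card (S \<union> D) = card S + card D"
    using card_Un_disjoint[OF finite_barrier fD] DW by auto
  have SDW: "S \<union> D \<subseteq> W"
    using barrier(1) DW by blast
  have "W - S - D = W - (S \<union> D)"
    by blast
  then have "num_odd_components E (W - (S \<union> D)) \<ge> card (S \<union> D)"
    using big cSD by simp
  moreover have "num_odd_components E (W - (S \<union> D)) \<le> card (S \<union> D)"
    using tutte_conditionD[OF tutte SDW] .
  ultimately have "num_odd_components E (W - (S \<union> D)) = card (S \<union> D)"
    by simp
  then have "card (S \<union> D) \<le> card S"
    using maximal SDW by blast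
  then show False
    using cSD fD D(2) by simp
qed

lemma components_odd:
  assumes C: "C \<in> components E (W - S)"
  shows "odd (card C)"
proof (rule ccontr)
  assume ev: "\<not> odd (card C)"
  obtain x where x: "x \<in> C"
    using components_nonempty[OF C] by blast
  have fC: "finite C"
    using finite_subset[OF components_subset[OF C] finite_Diff[OF fin]] .
  then have "card C > 0"
    using x card_gt_0_iff by blast
  then have "odd (card C - 1)"
    using ev by presburger
  then have "odd (card (C - {x}))"
    using x by (simp add: card_Diff_singleton)
  then have "odd (num_odd_components E (C - {x}))"
    using even_num_odd_components_iff[OF sym] fC by blast
  then have "num_odd_components E (C - {x}) \<ge> 1"
    using odd_pos by fastforce
  moreover have "num_odd_components E (W - S - {x}) + (if odd (card C) then 1 else 0)
      = num_odd_components E (W - S) + num_odd_components E (C - {x})"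
    using num_odd_components_Diff[OF sym finite_Diff[OF fin] C] x by simp
  ultimately have "num_odd_components E (W - S - {x}) \<ge> card S + card {x}"
    using ev barrier(2) by simp
  moreover have "num_odd_components E (W - S - {x}) < card S + card {x}"
    using no_larger_barrier[OF C] x by blast
  ultimately show False
    by linarith
qed

lemma tutte_condition_component_minus:
  assumes C: "C \<in> components E (W - S)" and x: "x \<in> C"
  shows "tutte_condition E (C - {x})"
  unfolding tutte_condition_def
proof (intro allI impI)
  fix T assume T: "T \<subseteq> C - {x}"
  have oC: "odd (card C)"
    using components_odd[OF C] .
  have fC: "finite C"
    using finite_subset[OF components_subset[OF C] finite_Diff[OF fin]] .
  have fT: "finite T"
    using finite_subset[OF T finite_Diff[OF fC]] .
  have xT: "x \<notin> T"
    using T by blast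
  have "card (C - {x} - T) = card C - 1 - card T" "card T \<le> card C - 1"
    using card_Diff_subset[OF fT T] card_mono[OF finite_Diff[OF fC] T] card_Diff_singleton[OF x]
    by simp_all
  then have "even (card (C - {x} - T)) \<longleftrightarrow> even (card T)"
    using oC by (auto elim!: oddE simp: even_diff_nat)
  then have par: "even (num_odd_components E (C - {x} - T)) \<longleftrightarrow> even (card T)"
    using even_num_odd_components_iff[OF sym, of "C - {x} - T"] fC by simp
  have "C - insert x T = C - {x} - T"
    by blast
  moreover have xTC: "insert x T \<subseteq> C"
    using T x by blast
  ultimately have "num_odd_components E (W - S - insert x T) + 1
      = card S + num_odd_components E (C - {x} - T)"
    using num_odd_components_Diff[OF sym finite_Diff[OF fin] C, of "insert x T"] oC barrier(2)
    by simp
  moreover have "num_odd_components E (W - S - insert x T) < card S + card T + 1"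
    using no_larger_barrier[OF C xTC] xT fT by simp
  ultimately have "num_odd_components E (C - {x} - T) < card T + 2"
    by linarith
  moreover have "n \<le> t" if "n < t + 2" "even n \<longleftrightarrow> even t" for n t :: nat
    using that by presburger
  ultimately show "num_odd_components E (C - {x} - T) \<le> card T"
    using par by blast
qed

lemma hall_condition_components:
  "hall_condition (\<lambda>C. {s\<in>S. \<exists>y\<in>C. E s y}) (components E (W - S))"
  unfolding hall_condition_def
proof (intro allI impI)
  fix A assume A: "A \<subseteq> components E (W - S)"
  define T where "T = (\<Union>C\<in>A. {s\<in>S. \<exists>y\<in>C. E s y})"
  have TS: "T \<subseteq> S"
    unfolding T_def by blast
  have "C \<in> components E (W - T)" if C: "C \<in> A" for C
  proof -
    have CC: "C \<in> components E (W - S)"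
      using A C by blast
    obtain y where y: "y \<in> C"
      using components_nonempty[OF CC] by blast
    have CWT: "C \<subseteq> W - T"
      using components_subset[OF CC] TS by blast
    have "b \<in> C" if a: "a \<in> C" and b: "b \<in> W - T" and ab: "E a b" for a b
    proof (cases "b \<in> S")
      case True
      then have "b \<in> T"
        unfolding T_def using C a sympD[OF sym ab] by blast
      then show ?thesis
        using b by blast
    next
      case False
      then show ?thesis
        using components_closed[OF sym CC a _ ab] b by blast
    qed
    then have "component E (W - T) y = C"
      using component_restrict[OF CWT y] component_of_component[OF sym CC y] by auto
    then show ?thesis
      using component_in_components[of y "W - T" E] CWT y by auto
  qed
  then have "A \<subseteq> {C \<in> components E (W - T). odd (card C)}"
    using A components_odd by blast
  then have "card A \<le> num_odd_components E (W - T)"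
    unfolding num_odd_components_def using fin by (intro card_mono) (simp_all add: finite_components)
  also have "\<dots> \<le> card T"
    using tutte_conditionD[OF tutte] TS barrier(1) by blast
  finally show "card A \<le> card (\<Union>C\<in>A. {s\<in>S. \<exists>y\<in>C. E s y})"
    unfolding T_def .
qed

lemma perfect_matching_map_from_components:
  assumes "\<And>C x. C \<in> components E (W - S) \<Longrightarrow> x \<in> C \<Longrightarrow> \<exists>m. perfect_matching_map E (C - {x}) m"
  shows "\<exists>m. perfect_matching_map E W m"
proof -
  let ?cs = "components E (W - S)"
  have "finite ?cs" "\<forall>C\<in>?cs. finite {s\<in>S. \<exists>y\<in>C. E s y}"
    using finite_components[OF finite_Diff[OF fin]] finite_barrier by simp_all
  then obtain f where f: "inj_on f ?cs" "\<forall>C\<in>?cs. f C \<in> {s\<in>S. \<exists>y\<in>C. E s y}"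
    using hall_marriage[OF _ _ hall_condition_components] by blast
  have "{C \<in> ?cs. odd (card C)} = ?cs"
    using components_odd by blast
  then have "card ?cs = card S"
    using barrier(2) unfolding num_odd_components_def by simp
  moreover have "f ` ?cs \<subseteq> S"
    using f(2) by blast
  ultimately have "f ` ?cs = S"
    using card_subset_eq[OF finite_barrier] card_image[OF f(1)] by metis
  then have bij: "bij_betw f ?cs S"
    using f(1) unfolding bij_betw_def by blast
  have "\<forall>C\<in>?cs. \<exists>y. y \<in> C \<and> E (f C) y"
    using f(2) by blast
  from bchoice[OF this] obtain y where y: "\<forall>C\<in>?cs. y C \<in> C \<and> E (f C) (y C)"
    by blast
  then have "\<forall>C\<in>?cs. \<exists>m. perfect_matching_map E (C - {y C}) m"
    using assms by simp
  from bchoice[OF this] obtain mc where "\<forall>C\<in>?cs. perfect_matching_map E (C - {y C}) (mc C)"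
    by blast
  then show ?thesis
    using perfect_matching_map_glue[OF sym barrier(1) bij] y by blast
qed

end

theorem tutte_perfect_matching_map:
  assumes "symp E" "finite W" "tutte_condition E W"
  shows "\<exists>m. perfect_matching_map E W m"
  using assms(2,3)
proof (induction "card W" arbitrary: W rule: less_induct)
  case less
  let ?barrier = "\<lambda>S. S \<subseteq> W \<and> num_odd_components E (W - S) = card S"
  have "?barrier {}"
    using tutte_conditionD[OF less.prems(2) empty_subsetI] by simp
  moreover have "\<forall>S. ?barrier S \<longrightarrow> card S < Suc (card W)"
    using card_mono[OF less.prems(1)] le_imp_less_Suc by blast
  ultimately have "\<exists>S. ?barrier S \<and> (\<forall>S'. ?barrier S' \<longrightarrow> card S' \<le> card S)"
    by (rule ex_has_greatest_nat)
  then obtain S where S: "?barrier S" and max: "\<forall>S'. ?barrier S' \<longrightarrow> card S' \<le> card S"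
    by blast
  interpret tutte_max_barrier E W S
  proof unfold_locales
    fix S' assume "S' \<subseteq> W" "num_odd_components E (W - S') = card S'"
    then show "card S' \<le> card S"
      using max by blast
  qed (use S assms(1) less.prems in auto)
  show ?case
  proof (rule perfect_matching_map_from_components)
    fix C x assume C: "C \<in> components E (W - S)" and x: "x \<in> C"
    have CW: "C \<subseteq> W"
      using components_subset[OF C] by blast
    then have fC: "finite C"
      using finite_subset[OF _ less.prems(1)] by blast
    have "card (C - {x}) < card C"
      by (rule card_Diff1_less[OF fC x])
    moreover have "card C \<le> card W"
      by (rule card_mono[OF less.prems(1) CW])
    ultimately have "card (C - {x}) < card W"
      by linarith
    then show "\<exists>m. perfect_matching_map E (C - {x}) m"
      using less.hyps[OF _ finite_Diff[OF fC] tutte_condition_component_minus[OF C x]] by blast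
  qed
qed

section \<open>Boundaries in multigraphs\<close>

definition ends_in :: "'v set \<Rightarrow> 'v multiset \<Rightarrow> nat" where
  "ends_in A M = size (filter_mset (\<lambda>x. x \<in> A) M)"

lemma ends_in_pair [simp]:
  "ends_in A {#a, b#} = (if a \<in> A then 1 else 0) + (if b \<in> A then 1 else 0)"
  unfolding ends_in_def by simp

lemma sum_count_eq_ends_in: "finite A \<Longrightarrow> (\<Sum>x\<in>A. count M x) = ends_in A M"
proof (induction M)
  case (add a M)
  have "(\<Sum>x\<in>A. count (add_mset a M) x) = (\<Sum>x\<in>A. count M x + (if x = a then 1 else 0))"
    by (rule sum.cong) auto
  also have "\<dots> = (\<Sum>x\<in>A. count M x) + (\<Sum>x\<in>A. if x = a then 1 else 0)"
    by (rule sum.distrib)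
  also have "(\<Sum>x\<in>A. if x = a then 1 else 0) = (if a \<in> A then 1 else (0::nat))"
    using add.prems by (simp add: sum.delta)
  finally show ?case
    using add by (simp add: ends_in_def)
qed (simp add: ends_in_def)

lemma wf_graph_finite: "wf_graph G \<Longrightarrow> finite (verts G)" "wf_graph G \<Longrightarrow> finite (edges G)"
  unfolding wf_graph_def by auto

lemma wf_graph_ends:
  assumes "wf_graph G" "e \<in> edges G"
  obtains a b where "ends G e = {#a, b#}" "a \<in> verts G" "b \<in> verts G"
proof -
  have s: "size (ends G e) = 2" and sub: "set_mset (ends G e) \<subseteq> verts G"
    using assms unfolding wf_graph_def by auto
  obtain a M where M: "ends G e = add_mset a M"
    using s by (metis size_eq_Suc_imp_eq_union numeral_2_eq_2 add_mset_add_single)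
  then have "size M = 1"
    using s by simp
  then obtain b where "M = {#b#}"
    by (metis size_1_singleton_mset)
  then show ?thesis
    using that sub M by auto
qed

lemma ends_in_le_2: "wf_graph G \<Longrightarrow> e \<in> edges G \<Longrightarrow> ends_in C (ends G e) \<le> 2"
  by (erule wf_graph_ends) auto

lemma sum_deg_eq_sum_ends_in:
  assumes "wf_graph G" "finite A"
  shows "(\<Sum>x\<in>A. deg G x) = (\<Sum>e\<in>edges G. ends_in A (ends G e))"
proof -
  have "(\<Sum>x\<in>A. deg G x) = (\<Sum>e\<in>edges G. \<Sum>x\<in>A. count (ends G e) x)"
    unfolding deg_def by (rule sum.swap)
  then show ?thesis
    using sum_count_eq_ends_in[OF assms(2)] by simp
qed

lemma sum_le_2_eq:
  fixes f :: "'a \<Rightarrow> nat"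
  shows "finite F \<Longrightarrow> \<forall>e\<in>F. f e \<le> 2 \<Longrightarrow>
    sum f F = card {e\<in>F. f e = 1} + 2 * card {e\<in>F. f e = 2}"
proof (induction F rule: finite_induct)
  case (insert x F)
  have "f x = 0 \<or> f x = 1 \<or> f x = 2"
    using insert.prems by auto
  moreover have "{e\<in>insert x F. f e = k} = (if f x = k then insert x {e\<in>F. f e = k} else {e\<in>F. f e = k})"
    for k by auto
  ultimately show ?case
    using insert by auto
qed simp

definition boundary :: "('v, 'e) mgraph \<Rightarrow> 'v set \<Rightarrow> 'e set" where
  "boundary G C = {e \<in> edges G. ends_in C (ends G e) = 1}"

definition inner_edges :: "('v, 'e) mgraph \<Rightarrow> 'v set \<Rightarrow> 'e set" where
  "inner_edges G C = {e \<in> edges G. ends_in C (ends G e) = 2}"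

lemma finite_boundary: "wf_graph G \<Longrightarrow> finite (boundary G C)"
  unfolding boundary_def by (rule finite_subset[OF _ wf_graph_finite(2)]) auto

lemma finite_inner_edges: "wf_graph G \<Longrightarrow> finite (inner_edges G C)"
  unfolding inner_edges_def by (rule finite_subset[OF _ wf_graph_finite(2)]) auto

lemma cubic_card_boundary:
  assumes cub: "cubic G" and C: "C \<subseteq> verts G"
  shows "3 * card C = card (boundary G C) + 2 * card (inner_edges G C)"
proof -
  have wf: "wf_graph G"
    using cub unfolding cubic_def by auto
  have fC: "finite C"
    using finite_subset[OF C wf_graph_finite(1)[OF wf]] .
  have "3 * card C = (\<Sum>x\<in>C. deg G x)"
    using cub C unfolding cubic_def by (simp add: subset_iff)
  also have "\<dots> = (\<Sum>e\<in>edges G. ends_in C (ends G e))"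
    using sum_deg_eq_sum_ends_in[OF wf fC] .
  also have "\<dots> = card (boundary G C) + 2 * card (inner_edges G C)"
    unfolding boundary_def inner_edges_def
    by (rule sum_le_2_eq) (use wf_graph_finite(2)[OF wf] ends_in_le_2[OF wf] in auto)
  finally show ?thesis .
qed

lemma even_card_verts:
  assumes cub: "cubic G"
  shows "even (card (verts G))"
proof -
  have wf: "wf_graph G"
    using cub unfolding cubic_def by auto
  have "boundary G (verts G) = {}"
    unfolding boundary_def by (auto elim: wf_graph_ends[OF wf])
  then have "3 * card (verts G) = 2 * card (inner_edges G (verts G))"
    using cubic_card_boundary[OF cub order_refl] by simp
  then show ?thesis
    by presburger
qed

lemma symp_adj: "symp (adj G)"
  unfolding adj_def by (rule sympI) (auto simp: add_mset_commute)

lemma rtranclp_leaves_set: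
  "R\<^sup>*\<^sup>* x y \<Longrightarrow> x \<in> C \<Longrightarrow> y \<notin> C \<Longrightarrow> \<exists>a b. R a b \<and> a \<in> C \<and> b \<notin> C"
  by (induction rule: rtranclp_induct) auto

lemma boundary_nonempty:
  assumes con: "connected G" and C: "x \<in> C" "y \<in> verts G" "y \<notin> C" "x \<in> verts G"
  shows "boundary G C \<noteq> {}"
proof -
  have "reach G x y"
    using con C unfolding connected_def by blast
  then obtain a b where ab: "adj G a b" "a \<in> C" "b \<notin> C"
    using rtranclp_leaves_set[of "adj G" x y C] C unfolding reach_def by blast
  then obtain e where "e \<in> edges G" "ends G e = {#a, b#}"
    unfolding adj_def by blast
  then have "e \<in> boundary G C"
    unfolding boundary_def using ab by simp
  then show ?thesis
    by blast
qed

lemma boundary_not_singleton: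
  assumes tc: "two_connected G" and C: "x \<in> C" "y \<in> verts G" "y \<notin> C" "x \<in> verts G"
  shows "boundary G C \<noteq> {e}"
proof
  assume ce: "boundary G C = {e}"
  then have "e \<in> edges G"
    unfolding boundary_def by blast
  then have "connected (del_edge G e)"
    using tc unfolding two_connected_def by blast
  moreover have "verts (del_edge G e) = verts G" "edges (del_edge G e) = edges G - {e}"
    "ends (del_edge G e) = ends G"
    unfolding del_edge_def by simp_all
  ultimately have "boundary (del_edge G e) C \<noteq> {}"
    using boundary_nonempty C by metis
  then show False
    using ce unfolding boundary_def del_edge_def by auto
qed

lemma card_boundary_ge_2:
  assumes tc: "two_connected G" and C: "C \<subseteq> verts G" "C \<noteq> {}" "verts G - C \<noteq> {}"
    and wf: "wf_graph G"
  shows "card (boundary G C) \<ge> 2"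
proof -
  obtain x y where xy: "x \<in> C" "y \<in> verts G" "y \<notin> C"
    using C by blast
  have xv: "x \<in> verts G"
    using xy(1) C(1) by blast
  have "connected G"
    using tc unfolding two_connected_def by blast
  then have "boundary G C \<noteq> {}"
    using boundary_nonempty[OF _ xy xv] by blast
  moreover have "boundary G C \<noteq> {e}" for e
    using boundary_not_singleton[OF tc xy xv] .
  ultimately have "card (boundary G C) \<noteq> 0" "card (boundary G C) \<noteq> 1"
    using finite_boundary[OF wf] card_1_singletonE by (simp, metis)
  then show ?thesis
    by linarith
qed

text \<open>Counting degrees, the boundary of C has the parity of C; 2-edge-connectivity rules out a
  single boundary edge.\<close>
lemma card_boundary_ge_3:
  assumes cub: "cubic G" and tc: "two_connected G"
    and C: "C \<subseteq> verts G" "C \<noteq> {}" "verts G - C \<noteq> {}" and odd: "odd (card C)"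
  shows "card (boundary G C) \<ge> 3"
proof -
  have "card (boundary G C) \<ge> 2"
    using card_boundary_ge_2[OF tc C] cub unfolding cubic_def by blast
  moreover have "odd b" if "3 * c = b + 2 * i" "odd c" for b c i :: nat
    using that by presburger
  then have "odd (card (boundary G C))"
    using cubic_card_boundary[OF cub C(1)] odd by blast
  then have "card (boundary G C) \<noteq> 2"
    by auto
  ultimately show ?thesis
    by linarith
qed

lemma two_connected_cubic_count_ends:
  assumes cub: "cubic G" and tc: "two_connected G" and e: "e \<in> edges G"
  shows "count (ends G e) x \<le> 1"
proof (rule ccontr)
  assume loop: "\<not> count (ends G e) x \<le> 1"
  have wf: "wf_graph G"
    using cub unfolding cubic_def by auto
  obtain a b where ab: "ends G e = {#a, b#}" "a \<in> verts G"
    using wf_graph_ends[OF wf e] by blast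
  then have ex: "ends G e = {#x, x#}" and xv: "x \<in> verts G"
    using loop by (auto split: if_splits)
  have "card (verts G) \<ge> 2"
    using tc unfolding two_connected_def by auto
  moreover have "card (verts G) \<le> 1" if "verts G \<subseteq> {x}"
    using card_mono[OF _ that] by simp
  ultimately have "verts G - {x} \<noteq> {}"
    by auto
  then have "card (boundary G {x}) \<ge> 3"
    using card_boundary_ge_3[OF cub tc] xv by simp
  moreover have "e \<in> inner_edges G {x}"
    unfolding inner_edges_def using e ex by simp
  then have "card (inner_edges G {x}) > 0"
    using finite_inner_edges[OF wf] card_gt_0_iff by blast
  ultimately show False
    using cubic_card_boundary[OF cub, of "{x}"] xv by simp
qed

section \<open>Perfect matchings of 2-connected cubic graphs\<close>

lemma pair_mset_eq_iff: "{#a, b#} = {#c, d#} \<longleftrightarrow> (a = c \<and> b = d) \<or> (a = d \<and> b = c)"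
  by (auto simp: add_eq_conv_ex)

lemma adj_del_verts: "adj (del_verts G U) a b \<longleftrightarrow> adj G a b \<and> a \<notin> U \<and> b \<notin> U"
  unfolding adj_def del_verts_def by auto

lemma adj_in_verts: "wf_graph G \<Longrightarrow> adj G a b \<Longrightarrow> a \<in> verts G \<and> b \<in> verts G"
  unfolding adj_def wf_graph_def by force

lemma reach_del_verts_iff:
  assumes wf: "wf_graph G"
  shows "reach (del_verts G U) x y \<longleftrightarrow> (induced (adj G) (verts G - U))\<^sup>*\<^sup>* x y"
proof -
  have "adj (del_verts G U) = induced (adj G) (verts G - U)"
    using adj_in_verts[OF wf] by (auto simp: adj_del_verts induced_def fun_eq_iff)
  then show ?thesis
    unfolding reach_def by simp
qed

lemma comp_of_del_verts:
  assumes "wf_graph G"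
  shows "comp_of (del_verts G U) x = component (adj G) (verts G - U) x"
proof -
  have "verts (del_verts G U) = verts G - U"
    by (simp add: del_verts_def)
  then show ?thesis
    unfolding comp_of_def component_def reach_del_verts_iff[OF assms] by simp
qed

lemma comps_del_verts:
  assumes "wf_graph G"
  shows "comps (del_verts G U) = components (adj G) (verts G - U)"
proof -
  have "verts (del_verts G U) = verts G - U"
    by (simp add: del_verts_def)
  then show ?thesis
    unfolding comps_def components_def comp_of_del_verts[OF assms] by simp
qed

lemma boundary_component:
  assumes wf: "wf_graph G" and C: "C \<in> components (adj G) X" and e: "e \<in> boundary G C"
  obtains a b where "ends G e = {#a, b#}" "a \<in> C" "b \<notin> X"
proof -
  have eE: "e \<in> edges G" and one: "ends_in C (ends G e) = 1"
    using e unfolding boundary_def by auto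
  obtain p q where pq: "ends G e = {#p, q#}"
    using wf_graph_ends[OF wf eE] by blast
  then have "adj G p q" "adj G q p"
    unfolding adj_def using eE by (auto simp: add_mset_commute)
  moreover have "p \<in> C \<and> q \<notin> C \<or> q \<in> C \<and> p \<notin> C"
    using one pq by (auto split: if_splits)
  ultimately show ?thesis
    using that pq components_closed[OF symp_adj C] by (metis add_mset_commute)
qed

lemma boundary_eq_UN_components:
  assumes wf: "wf_graph G" and Y: "Y \<subseteq> verts G"
  shows "boundary G Y = (\<Union>C\<in>components (adj G) (verts G - Y). boundary G C)"
proof (intro equalityI subsetI)
  fix e assume e: "e \<in> boundary G Y"
  then have eE: "e \<in> edges G" and "ends_in Y (ends G e) = 1"
    unfolding boundary_def by auto
  moreover obtain p q where pq: "ends G e = {#p, q#}" "p \<in> verts G" "q \<in> verts G"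
    using wf_graph_ends[OF wf eE] by blast
  ultimately obtain a b where ab: "ends G e = {#a, b#}" "a \<in> verts G - Y" "b \<in> Y"
  proof (cases "p \<in> Y")
    case True
    then have "q \<notin> Y"
      using \<open>ends_in Y (ends G e) = 1\<close> pq(1) by (auto split: if_splits)
    then show ?thesis
      using that[of q p] True pq by (simp add: add_mset_commute)
  next
    case False
    then have "q \<in> Y"
      using \<open>ends_in Y (ends G e) = 1\<close> pq(1) by (auto split: if_splits)
    then show ?thesis
      using that[of p q] False pq by simp
  qed
  let ?C = "component (adj G) (verts G - Y) a"
  have "a \<in> ?C" "b \<notin> ?C"
    using component_self[OF ab(2)] component_subset ab(3) by fast+
  then have "e \<in> boundary G ?C"
    unfolding boundary_def using eE ab(1) by simp
  then show "e \<in> (\<Union>C\<in>components (adj G) (verts G - Y). boundary G C)"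
    using component_in_components[OF ab(2)] by blast
next
  fix e assume "e \<in> (\<Union>C\<in>components (adj G) (verts G - Y). boundary G C)"
  then obtain C where C: "C \<in> components (adj G) (verts G - Y)" and e: "e \<in> boundary G C"
    by blast
  obtain a b where ab: "ends G e = {#a, b#}" "a \<in> C" "b \<notin> verts G - Y"
    using boundary_component[OF wf C e] by blast
  have eE: "e \<in> edges G"
    using e unfolding boundary_def by simp
  have "a \<in> verts G - Y"
    using ab(2) components_subset[OF C] by blast
  moreover have "b \<in> verts G"
    using wf eE ab(1) unfolding wf_graph_def by auto
  ultimately show "e \<in> boundary G Y"
    using eE ab unfolding boundary_def by simp
qed

lemma boundary_components_disjoint:
  assumes wf: "wf_graph G" and C: "C \<in> components (adj G) X" and D: "D \<in> components (adj G) X"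
    and CD: "C \<noteq> D"
  shows "boundary G C \<inter> boundary G D = {}"
proof (rule ccontr)
  assume "boundary G C \<inter> boundary G D \<noteq> {}"
  then obtain e where e: "e \<in> boundary G C" "e \<in> boundary G D"
    by blast
  obtain a b where ab: "ends G e = {#a, b#}" "a \<in> C" "b \<notin> X"
    using boundary_component[OF wf C e(1)] by blast
  obtain a' b' where ab': "ends G e = {#a', b'#}" "a' \<in> D" "b' \<notin> X"
    using boundary_component[OF wf D e(2)] by blast
  have "a \<in> X" "a' \<in> X"
    using ab(2) ab'(2) components_subset C D by blast+
  then have "a = a'"
    using ab(1,3) ab'(1,3) by (auto simp: pair_mset_eq_iff)
  then show False
    using components_disjoint[OF symp_adj C D CD] ab(2) ab'(2) by blast
qed

lemma sum_card_boundary_components: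
  assumes wf: "wf_graph G" and Y: "Y \<subseteq> verts G"
  shows "(\<Sum>C\<in>components (adj G) (verts G - Y). card (boundary G C)) = card (boundary G Y)"
proof -
  have "finite (components (adj G) (verts G - Y))"
    using wf_graph_finite(1)[OF wf] by (simp add: finite_components)
  then show ?thesis
    unfolding boundary_eq_UN_components[OF wf Y]
    using boundary_components_disjoint[OF wf] finite_boundary[OF wf]
    by (subst card_UN_disjoint) auto
qed

definition edge_between :: "('v, 'e) mgraph \<Rightarrow> 'v \<Rightarrow> 'v \<Rightarrow> 'e" where
  "edge_between G a b = (SOME f. f \<in> edges G \<and> ends G f = {#a, b#})"

lemma edge_between:
  "adj G a b \<Longrightarrow> edge_between G a b \<in> edges G \<and> ends G (edge_between G a b) = {#a, b#}"
  unfolding edge_between_def adj_def by (rule someI_ex) auto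

lemma edge_between_commute: "edge_between G a b = edge_between G b a"
  unfolding edge_between_def by (simp add: add_mset_commute)

definition matching_edges :: "('v, 'e) mgraph \<Rightarrow> 'v set \<Rightarrow> ('v \<Rightarrow> 'v) \<Rightarrow> 'e set" where
  "matching_edges G W m = (\<lambda>x. edge_between G x (m x)) ` W"

lemma matching_edges_subset:
  "perfect_matching_map (adj G) W m \<Longrightarrow> matching_edges G W m \<subseteq> edges G"
  unfolding matching_edges_def perfect_matching_map_def using edge_between by fastforce

lemma matching_edges_ends:
  "perfect_matching_map (adj G) W m \<Longrightarrow> f \<in> matching_edges G W m \<Longrightarrow>
     \<exists>a. a \<in> W \<and> m a \<in> W \<and> m a \<noteq> a \<and> ends G f = {#a, m a#}"
  unfolding matching_edges_def perfect_matching_map_def using edge_between by fastforce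

lemma matching_edges_at:
  assumes pm: "perfect_matching_map (adj G) W m" and z: "z \<in> W"
  shows "{f \<in> matching_edges G W m. z \<in># ends G f} = {edge_between G z (m z)}"
proof (intro equalityI subsetI)
  fix f assume "f \<in> {f \<in> matching_edges G W m. z \<in># ends G f}"
  then obtain x where x: "x \<in> W" "f = edge_between G x (m x)" and zf: "z \<in># ends G f"
    unfolding matching_edges_def by blast
  have mx: "m (m x) = x" "adj G x (m x)"
    using pm x(1) unfolding perfect_matching_map_def by auto
  then have "z = x \<or> z = m x"
    using edge_between[OF mx(2)] x(2) zf by auto
  then show "f \<in> {edge_between G z (m z)}"
    using x(2) mx(1) edge_between_commute by auto
next
  fix f assume "f \<in> {edge_between G z (m z)}"
  moreover have "adj G z (m z)"
    using pm z unfolding perfect_matching_map_def by auto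
  ultimately show "f \<in> {f \<in> matching_edges G W m. z \<in># ends G f}"
    using edge_between[of G z "m z"] z unfolding matching_edges_def by auto
qed

lemma other_eq: "ends G e = {#x, y#} \<Longrightarrow> other G x e = y"
  unfolding other_def by (rule the_equality) (auto simp: pair_mset_eq_iff)

lemma at_two_connected_cubic:
  assumes cub: "cubic G" and tc: "two_connected G" and e: "e \<in> at G x"
  shows "ends G e = {#x, other G x e#}" "other G x e \<noteq> x" "other G x e \<in> verts G"
    "e \<in> edges G"
proof -
  have wf: "wf_graph G"
    using cub unfolding cubic_def by auto
  have eE: "e \<in> edges G" and xe: "x \<in># ends G e"
    using e unfolding at_def by auto
  obtain a b where ab: "ends G e = {#a, b#}" "a \<in> verts G" "b \<in> verts G"
    using wf_graph_ends[OF wf eE] by blast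
  then obtain y where y: "ends G e = {#x, y#}" "y \<in> verts G"
    using xe by (cases "x = a") (auto simp: add_mset_commute)
  moreover have "y \<noteq> x"
    using two_connected_cubic_count_ends[OF cub tc eE, of x] y(1) by auto
  ultimately show "ends G e = {#x, other G x e#}" "other G x e \<noteq> x" "other G x e \<in> verts G"
    "e \<in> edges G"
    using other_eq[OF y(1)] eE by auto
qed

lemma card_at_two_connected_cubic:
  assumes cub: "cubic G" and tc: "two_connected G" and x: "x \<in> verts G"
  shows "card (at G x) = 3"
proof -
  have wf: "wf_graph G"
    using cub unfolding cubic_def by auto
  have "count (ends G e) x = (if e \<in> at G x then 1 else 0)" if e: "e \<in> edges G" for e
  proof (cases "x \<in># ends G e")
    case True
    then have "0 < count (ends G e) x"
      by simp
    then have "count (ends G e) x = 1"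
      using two_connected_cubic_count_ends[OF cub tc e, of x] by linarith
    then show ?thesis
      using True e by (simp add: at_def)
  next
    case False
    then show ?thesis
      by (simp add: at_def count_eq_zero_iff)
  qed
  then have "deg G x = (\<Sum>e\<in>edges G. if e \<in> at G x then 1 else 0)"
    unfolding deg_def by (rule sum.cong[OF refl])
  also have "\<dots> = card (at G x)"
    using wf_graph_finite(2)[OF wf] by (simp add: sum.If_cases at_def Int_def)
  finally show ?thesis
    using cub x unfolding cubic_def by simp
qed

text \<open>Removing the ends of an edge e leaves a graph satisfying Tutte's condition: a set S
  together with both ends of e has at most 3|S| + 4 boundary edges, while every odd component
  of the rest takes at least three of them.\<close>
lemma tutte_condition_Diff_edge:
  assumes cub: "cubic G" and tc: "two_connected G" and e: "e \<in> edges G"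
    and exy: "ends G e = {#x, y#}" and xy: "x \<noteq> y"
  shows "tutte_condition (adj G) (verts G - {x, y})"
  unfolding tutte_condition_def
proof (intro allI impI)
  fix S assume S: "S \<subseteq> verts G - {x, y}"
  have wf: "wf_graph G"
    using cub unfolding cubic_def by auto
  have fV: "finite (verts G)"
    using wf_graph_finite(1)[OF wf] .
  have xyV: "x \<in> verts G" "y \<in> verts G"
    using e exy wf unfolding wf_graph_def by auto
  define Y where "Y = S \<union> {x, y}"
  have YV: "Y \<subseteq> verts G" and eq: "verts G - {x, y} - S = verts G - Y"
    using S xyV unfolding Y_def by auto
  have fS: "finite S"
    using finite_subset[OF S] fV by simp
  have cY: "card Y = card S + 2"
    unfolding Y_def using S xy fS by (subst card_Un_disjoint) auto
  have "e \<in> inner_edges G Y"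
    unfolding inner_edges_def Y_def using e exy by simp
  then have "card (inner_edges G Y) > 0"
    using finite_inner_edges[OF wf] card_gt_0_iff by blast
  then have cutY: "card (boundary G Y) \<le> 3 * card S + 4"
    using cubic_card_boundary[OF cub YV] cY by simp
  let ?cs = "components (adj G) (verts G - Y)" and ?o = "num_odd_components (adj G) (verts G - Y)"
  have fcs: "finite ?cs"
    using fV by (simp add: finite_components)
  have "3 * ?o = (\<Sum>C\<in>{C\<in>?cs. odd (card C)}. 3)"
    unfolding num_odd_components_def by simp
  also have "\<dots> \<le> (\<Sum>C\<in>{C\<in>?cs. odd (card C)}. card (boundary G C))"
  proof (rule sum_mono)
    fix C assume C: "C \<in> {C\<in>?cs. odd (card C)}"
    then have "C \<subseteq> verts G - Y" "C \<noteq> {}"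
      using components_subset components_nonempty by blast+
    then show "3 \<le> card (boundary G C)"
      using card_boundary_ge_3[OF cub tc] C xyV unfolding Y_def by blast
  qed
  also have "\<dots> \<le> (\<Sum>C\<in>?cs. card (boundary G C))"
    by (rule sum_mono2[OF fcs]) auto
  also have "\<dots> = card (boundary G Y)"
    using sum_card_boundary_components[OF wf YV] .
  finally have "3 * ?o \<le> 3 * card S + 4"
    using cutY by simp
  moreover have "even ?o \<longleftrightarrow> even (card S)"
    using even_num_odd_components_iff[OF symp_adj, of "verts G - Y"] fV YV cY
      card_Diff_subset[OF finite_subset[OF YV fV] YV] card_mono[OF fV YV] even_card_verts[OF cub]
    by (simp add: even_diff_nat)
  moreover have "k \<le> s" if "3 * k \<le> 3 * s + 4" "even k \<longleftrightarrow> even s" for k s :: nat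
    using that by presburger
  ultimately show "num_odd_components (adj G) (verts G - {x, y} - S) \<le> card S"
    unfolding eq by blast
qed

lemma perfect_matching_containing_edge:
  assumes cub: "cubic G" and tc: "two_connected G" and e: "e \<in> edges G"
  obtains M where "perfect_matching G M" "e \<in> M"
proof -
  have wf: "wf_graph G"
    using cub unfolding cubic_def by auto
  obtain x y where exy: "ends G e = {#x, y#}"
    using wf_graph_ends[OF wf e] by blast
  have xy: "x \<noteq> y"
    using two_connected_cubic_count_ends[OF cub tc e, of x] exy by auto
  have xyV: "x \<in> verts G" "y \<in> verts G"
    using e exy wf unfolding wf_graph_def by auto
  let ?W = "verts G - {x, y}"
  obtain m where pm: "perfect_matching_map (adj G) ?W m"
    using tutte_perfect_matching_map[OF symp_adj _ tutte_condition_Diff_edge[OF cub tc e exy xy]]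
      wf_graph_finite(1)[OF wf] by blast
  define M where "M = insert e (matching_edges G ?W m)"
  have inW: "w \<in> ?W" if "f \<in> matching_edges G ?W m" "w \<in># ends G f" for f w
    using matching_edges_ends[OF pm that(1)] that(2) by auto
  have "perfect_matching G M"
    unfolding perfect_matching_def
  proof (intro conjI ballI allI)
    show "M \<subseteq> edges G"
      unfolding M_def using matching_edges_subset[OF pm] e by blast
  next
    fix f z assume "f \<in> M"
    then show "count (ends G f) z \<le> 1"
      unfolding M_def using exy xy matching_edges_ends[OF pm] by fastforce
  next
    fix z assume z: "z \<in> verts G"
    show "card {f \<in> M. z \<in># ends G f} = 1"
    proof (cases "z \<in> ?W")
      case True
      then have "{f \<in> M. z \<in># ends G f} = {f \<in> matching_edges G ?W m. z \<in># ends G f}"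
        unfolding M_def using exy by auto
      then show ?thesis
        using matching_edges_at[OF pm True] by simp
    next
      case False
      then have "{f \<in> M. z \<in># ends G f} = {e}"
        unfolding M_def using inW z exy by auto
      then show ?thesis
        by simp
    qed
  qed
  then show ?thesis
    using that unfolding M_def by blast
qed

definition pm_cover :: "('v, 'e) mgraph \<Rightarrow> 'e set list \<Rightarrow> bool" where
  "pm_cover G Ms \<longleftrightarrow> (\<forall>M\<in>set Ms. perfect_matching G M) \<and> \<Union>(set Ms) = edges G"

lemma pm_coverI:
  assumes "\<forall>M\<in>set Ms. perfect_matching G M" "edges G \<subseteq> \<Union>(set Ms)"
  shows "pm_cover G Ms"
proof -
  have "\<Union>(set Ms) \<subseteq> edges G"
    using assms(1) unfolding perfect_matching_def by blast
  then show ?thesis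
    unfolding pm_cover_def using assms by blast
qed

lemma pm_index_le: "pm_cover G Ms \<Longrightarrow> pm_index G \<le> length Ms"
  unfolding pm_index_def pm_cover_def by (rule Least_le) blast

text \<open>pm_index is defined by LEAST, so it only has its intended meaning once some cover exists.\<close>
lemma pm_index_attained:
  assumes "pm_cover G Ms"
  obtains Ms' where "pm_cover G Ms'" "length Ms' = pm_index G"
proof -
  let ?P = "\<lambda>k. \<exists>Ms. length Ms = k \<and> (\<forall>M\<in>set Ms. perfect_matching G M) \<and> \<Union>(set Ms) = edges G"
  have "?P (length Ms)"
    using assms unfolding pm_cover_def by blast
  then have "?P (pm_index G)"
    unfolding pm_index_def by (rule LeastI)
  then show ?thesis
    using that unfolding pm_cover_def by blast
qed

lemma pm_cover_exists:
  assumes cub: "cubic G" and tc: "two_connected G"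
  obtains Ms where "pm_cover G Ms"
proof -
  have wf: "wf_graph G"
    using cub unfolding cubic_def by auto
  obtain es where es: "set es = edges G"
    using finite_list[OF wf_graph_finite(2)[OF wf]] by blast
  define pick where "pick e = (SOME M. perfect_matching G M \<and> e \<in> M)" for e
  have pick: "perfect_matching G (pick e) \<and> e \<in> pick e" if "e \<in> edges G" for e
    unfolding pick_def using perfect_matching_containing_edge[OF cub tc that]
    by (metis (mono_tags, lifting) someI_ex)
  have "pm_cover G (map pick es)"
    using pick es by (intro pm_coverI) force+
  then show ?thesis
    using that by blast
qed

section \<open>Inflating a vertex to a triangle\<close>

lemma perfect_matching_at:
  assumes "perfect_matching X M" "z \<in> verts X"
  obtains d where "{d' \<in> M. z \<in># ends X d'} = {d}"
  using assms unfolding perfect_matching_def by (metis card_1_singletonE)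

lemma perfect_matching_unique_at:
  assumes "perfect_matching X M" "z \<in> verts X" "d \<in> M" "d' \<in> M" "z \<in># ends X d" "z \<in># ends X d'"
  shows "d = d'"
proof -
  obtain d0 where d0: "{d' \<in> M. z \<in># ends X d'} = {d0}"
    using perfect_matching_at[OF assms(1,2)] .
  have "d \<in> {d' \<in> M. z \<in># ends X d'}" "d' \<in> {d' \<in> M. z \<in># ends X d'}"
    using assms(3-6) by simp_all
  then show ?thesis
    unfolding d0 by simp
qed

locale inflation =
  fixes H :: "('v, 'e) mgraph" and u :: 'v
  assumes cubic_H: "cubic H" and two_connected_H: "two_connected H" and u: "u \<in> verts H"
begin

abbreviation spokes :: "'e set" where
  "spokes \<equiv> at H u"

abbreviation Hu :: "('v + 'e, 'e + 'e set) mgraph" where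
  "Hu \<equiv> inflate H u"

definition triangle :: "'e set set" where
  "triangle = {{e1, e2} | e1 e2. e1 \<in> spokes \<and> e2 \<in> spokes \<and> e1 \<noteq> e2}"

lemma wf_H: "wf_graph H"
  using cubic_H unfolding cubic_def by auto

lemma spoke:
  assumes "e \<in> spokes"
  shows "ends H e = {#u, other H u e#}" "other H u e \<noteq> u" "other H u e \<in> verts H"
    "e \<in> edges H"
  using at_two_connected_cubic[OF cubic_H two_connected_H assms] by auto

lemma card_spokes: "card spokes = 3"
  using card_at_two_connected_cubic[OF cubic_H two_connected_H u] .

lemma finite_spokes: "finite spokes"
  using card_spokes by (metis card.infinite zero_neq_numeral)

lemma card_spokes_Diff: "j \<in> spokes \<Longrightarrow> card (spokes - {j}) = 2"
  using card_spokes finite_spokes by simp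

lemma u_notin_ends: "e \<in> edges H \<Longrightarrow> e \<notin> spokes \<Longrightarrow> u \<notin># ends H e"
  unfolding at_def by auto

lemma verts_Hu: "verts Hu = Inl ` (verts H - {u}) \<union> Inr ` spokes"
  unfolding inflate_def by simp

lemma edges_Hu: "edges Hu = Inl ` edges H \<union> Inr ` triangle"
  unfolding inflate_def triangle_def by simp

lemma ends_Hu_spoke: "e \<in> spokes \<Longrightarrow> ends Hu (Inl e) = {#Inl (other H u e), Inr e#}"
  unfolding inflate_def at_def by simp

lemma ends_Hu_non_spoke:
  assumes "e \<notin> spokes" "e \<in> edges H"
  obtains a b where "ends H e = {#a, b#}" "ends Hu (Inl e) = {#Inl a, Inl b#}" "a \<noteq> b"
    "a \<in> verts H - {u}" "b \<in> verts H - {u}"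
proof -
  obtain a b where ab: "ends H e = {#a, b#}" "a \<in> verts H" "b \<in> verts H"
    using wf_graph_ends[OF wf_H assms(2)] by blast
  moreover have "a \<noteq> b"
    using two_connected_cubic_count_ends[OF cubic_H two_connected_H assms(2), of a] ab by auto
  moreover have "a \<noteq> u" "b \<noteq> u"
    using u_notin_ends[OF assms(2,1)] ab by auto
  moreover have "ends Hu (Inl e) = image_mset Inl (ends H e)"
    using assms unfolding inflate_def at_def by simp
  ultimately show ?thesis
    using that by simp
qed

lemma triangleE:
  assumes "s \<in> triangle"
  obtains e1 e2 where "s = {e1, e2}" "e1 \<in> spokes" "e2 \<in> spokes" "e1 \<noteq> e2"
  using assms unfolding triangle_def by blast

lemma ends_Hu_triangle:
  assumes "s \<in> triangle"
  obtains e1 e2 where "s = {e1, e2}" "e1 \<in> spokes" "e2 \<in> spokes" "e1 \<noteq> e2"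
    "ends Hu (Inr s) = {#Inr e1, Inr e2#}"
proof -
  obtain e1 e2 where e: "s = {e1, e2}" "e1 \<in> spokes" "e2 \<in> spokes" "e1 \<noteq> e2"
    using triangleE[OF assms] by blast
  have "ends Hu (Inr s) = image_mset Inr (mset_set s)"
    unfolding inflate_def by simp
  also have "mset_set s = {#e1, e2#}"
    using e by simp
  finally show ?thesis
    using that e by simp
qed

lemma triangle_eq_spokes_Diff:
  assumes "s \<in> triangle"
  obtains j where "j \<in> spokes" "s = spokes - {j}"
proof -
  obtain e1 e2 where e: "s = {e1, e2}" "e1 \<in> spokes" "e2 \<in> spokes" "e1 \<noteq> e2"
    using triangleE[OF assms] by blast
  then have "card (spokes - s) = 1"
    using card_spokes finite_spokes by (simp add: card_Diff_subset)
  then obtain j where j: "spokes - s = {j}"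
    by (auto simp: card_1_singleton_iff)
  then have "s = spokes - {j}"
    using e by blast
  then show ?thesis
    using that j by blast
qed

lemma spokes_Diff_in_triangle:
  assumes "j \<in> spokes"
  shows "spokes - {j} \<in> triangle"
proof -
  obtain e1 e2 where "spokes - {j} = {e1, e2}" "e1 \<noteq> e2"
    using card_spokes_Diff[OF assms] by (auto simp: card_2_iff)
  then show ?thesis
    unfolding triangle_def by blast
qed

lemma Inl_in_ends_Hu_Inl:
  assumes "x \<noteq> u" "e \<in> edges H"
  shows "Inl x \<in># ends Hu (Inl e) \<longleftrightarrow> x \<in># ends H e"
proof (cases "e \<in> spokes")
  case True
  then show ?thesis
    using ends_Hu_spoke spoke assms by auto
next
  case False
  obtain a b where "ends H e = {#a, b#}" "ends Hu (Inl e) = {#Inl a, Inl b#}"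
    using ends_Hu_non_spoke[OF False assms(2)] by blast
  then show ?thesis
    by auto
qed

lemma Inl_notin_ends_Hu_Inr: "Inl x \<notin># ends Hu (Inr s)"
  unfolding inflate_def by auto

lemma Inr_in_ends_Hu_Inl:
  assumes "a \<in> spokes" "e \<in> edges H"
  shows "Inr a \<in># ends Hu (Inl e) \<longleftrightarrow> e = a"
proof (cases "e \<in> spokes")
  case True
  then show ?thesis
    using ends_Hu_spoke by auto
next
  case False
  obtain a b where "ends Hu (Inl e) = {#Inl a, Inl b#}"
    using ends_Hu_non_spoke[OF False assms(2)] by blast
  then show ?thesis
    using False assms(1) by auto
qed

lemma Inr_in_ends_Hu_Inr: "s \<in> triangle \<Longrightarrow> Inr a \<in># ends Hu (Inr s) \<longleftrightarrow> a \<in> s"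
  by (erule ends_Hu_triangle) auto

lemma Hu_count_ends:
  assumes "d \<in> edges Hu"
  shows "count (ends Hu d) z \<le> 1"
proof -
  have "\<exists>p q. ends Hu d = {#p, q#} \<and> p \<noteq> q"
  proof (cases d)
    case (Inl e)
    then have e: "e \<in> edges H"
      using assms unfolding edges_Hu by auto
    show ?thesis
    proof (cases "e \<in> spokes")
      case True
      then show ?thesis
        using Inl ends_Hu_spoke by blast
    next
      case False
      then show ?thesis
        using ends_Hu_non_spoke[OF False e] Inl by (metis Inl_inject)
    qed
  next
    case (Inr s)
    then have "s \<in> triangle"
      using assms unfolding edges_Hu by auto
    then show ?thesis
      using Inr by (elim ends_Hu_triangle) auto
  qed
  then show ?thesis
    by auto
qed

definition base_edges :: "('e + 'e set) set \<Rightarrow> 'e set" where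
  "base_edges M = {e. Inl e \<in> M}"

definition matched_spokes :: "('e + 'e set) set \<Rightarrow> 'e set" where
  "matched_spokes M = {e \<in> spokes. Inl e \<in> M}"

lemma base_edges_subset: "perfect_matching Hu M \<Longrightarrow> base_edges M \<subseteq> edges H"
  unfolding base_edges_def perfect_matching_def edges_Hu by auto

lemma matched_spokes_triangle:
  assumes pm: "perfect_matching Hu M" and s: "s \<in> triangle" and sM: "Inr s \<in> M"
  shows "matched_spokes M = spokes - s"
proof -
  have sub: "M \<subseteq> edges Hu"
    using pm unfolding perfect_matching_def by auto
  have vert: "Inr c \<in> verts Hu" if "c \<in> spokes" for c
    using that unfolding verts_Hu by blast
  have "Inl c \<notin> M" if c: "c \<in> s" for c
  proof
    assume "Inl c \<in> M"
    moreover have "c \<in> spokes"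
      using c s by (auto elim: triangleE)
    ultimately have "Inl c = Inr s"
      using perfect_matching_unique_at[OF pm vert _ sM] ends_Hu_spoke Inr_in_ends_Hu_Inr[OF s] c
      by simp
    then show False
      by simp
  qed
  moreover obtain j where j: "j \<in> spokes" "s = spokes - {j}"
    using triangle_eq_spokes_Diff[OF s] by blast
  moreover have "Inl j \<in> M"
  proof -
    obtain d where d: "{d' \<in> M. Inr j \<in># ends Hu d'} = {d}"
      using perfect_matching_at[OF pm vert[OF j(1)]] by blast
    then have dM: "d \<in> M" "Inr j \<in># ends Hu d"
      by auto
    then consider e where "e \<in> edges H" "d = Inl e" | s' where "s' \<in> triangle" "d = Inr s'"
      using sub unfolding edges_Hu by blast
    then show ?thesis
    proof cases
      case 1
      then show ?thesis
        using Inr_in_ends_Hu_Inl[OF j(1)] dM by simp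
    next
      case 2
      then have js: "j \<in> s'"
        using Inr_in_ends_Hu_Inr dM by simp
      obtain w where w: "w \<in> s'" "w \<noteq> j"
        using 2(1) by (elim triangleE) auto
      then have ws: "w \<in> s" and wA: "w \<in> spokes"
        using j 2(1) by (auto elim: triangleE)
      have "Inr w \<in># ends Hu (Inr s')" "Inr w \<in># ends Hu (Inr s)"
        using Inr_in_ends_Hu_Inr[OF 2(1)] Inr_in_ends_Hu_Inr[OF s] w(1) ws by simp_all
      then have "Inr s' = Inr s"
        using perfect_matching_unique_at[OF pm vert[OF wA] _ sM] dM(1) 2(2) by blast
      then show ?thesis
        using js j by simp
    qed
  qed
  ultimately show ?thesis
    unfolding matched_spokes_def by auto
qed

lemma matched_spokes_cases:
  assumes pm: "perfect_matching Hu M"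
  shows "matched_spokes M = spokes \<or> (\<exists>j\<in>spokes. matched_spokes M = {j} \<and> Inr (spokes - {j}) \<in> M)"
proof (cases "matched_spokes M = spokes")
  case False
  then obtain a where a: "a \<in> spokes" "Inl a \<notin> M"
    unfolding matched_spokes_def by blast
  have "Inr a \<in> verts Hu"
    using a unfolding verts_Hu by blast
  then obtain d where "{d' \<in> M. Inr a \<in># ends Hu d'} = {d}"
    using perfect_matching_at[OF pm] by blast
  then have dM: "d \<in> M" "Inr a \<in># ends Hu d"
    by auto
  then consider e where "e \<in> edges H" "d = Inl e" | s where "s \<in> triangle" "d = Inr s"
    using pm unfolding perfect_matching_def edges_Hu by blast
  then show ?thesis
  proof cases
    case 1
    then show ?thesis
      using Inr_in_ends_Hu_Inl[OF a(1)] dM a by simp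
  next
    case 2
    obtain j where j: "j \<in> spokes" "s = spokes - {j}"
      using triangle_eq_spokes_Diff[OF 2(1)] by blast
    have "matched_spokes M = {j}"
      using matched_spokes_triangle[OF pm 2(1)] dM 2 j by auto
    then show ?thesis
      using j dM 2 by auto
  qed
qed simp

lemma base_edges_at:
  assumes pm: "perfect_matching Hu M" and x: "x \<noteq> u"
  shows "{d \<in> M. Inl x \<in># ends Hu d} = Inl ` {e \<in> base_edges M. x \<in># ends H e}"
proof (intro equalityI subsetI)
  fix d assume d: "d \<in> {d \<in> M. Inl x \<in># ends Hu d}"
  then obtain e where e: "d = Inl e" "e \<in> edges H"
    using pm Inl_notin_ends_Hu_Inr unfolding perfect_matching_def edges_Hu by blast
  then have "e \<in> base_edges M" "x \<in># ends H e"
    using d Inl_in_ends_Hu_Inl[OF x] unfolding base_edges_def by auto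
  then show "d \<in> Inl ` {e \<in> base_edges M. x \<in># ends H e}"
    using e(1) by blast
next
  fix d :: "'e + 'e set" assume "d \<in> Inl ` {e \<in> base_edges M. x \<in># ends H e}"
  then obtain e where "d = Inl e" "e \<in> base_edges M" "x \<in># ends H e"
    by blast
  then show "d \<in> {d \<in> M. Inl x \<in># ends Hu d}"
    using base_edges_subset[OF pm] Inl_in_ends_Hu_Inl[OF x] unfolding base_edges_def by auto
qed

lemma card_base_edges_at:
  assumes pm: "perfect_matching Hu M" and x: "x \<in> verts H - {u}"
  shows "card {e \<in> base_edges M. x \<in># ends H e} = 1"
proof -
  have "Inl x \<in> verts Hu"
    using x unfolding verts_Hu by blast
  then have "card {d \<in> M. Inl x \<in># ends Hu d} = 1"
    using pm unfolding perfect_matching_def by blast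
  then show ?thesis
    using base_edges_at[OF pm] x by (simp add: card_image)
qed

lemma perfect_matching_Int_spokes:
  assumes "perfect_matching H M"
  obtains j where "M \<inter> spokes = {j}"
proof -
  have "card {e \<in> M. u \<in># ends H e} = 1"
    using assms u unfolding perfect_matching_def by blast
  moreover have "{e \<in> M. u \<in># ends H e} = M \<inter> spokes"
    using assms unfolding perfect_matching_def at_def by auto
  ultimately show ?thesis
    using that by (auto simp: card_1_singleton_iff)
qed

lemma perfect_matching_inflate:
  assumes pm: "perfect_matching H M" and j: "M \<inter> spokes = {j}"
  shows "perfect_matching Hu (Inl ` M \<union> {Inr (spokes - {j})})"
  unfolding perfect_matching_def
proof (intro conjI ballI allI)
  let ?L = "Inl ` M \<union> {Inr (spokes - {j})}"
  have jA: "j \<in> spokes" and MH: "M \<subseteq> edges H"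
    using j pm unfolding perfect_matching_def by auto
  have sT: "spokes - {j} \<in> triangle"
    using spokes_Diff_in_triangle[OF jA] .
  show LE: "?L \<subseteq> edges Hu"
    using MH sT unfolding edges_Hu by blast
  show "count (ends Hu d) z \<le> 1" if "d \<in> ?L" for d z
    using Hu_count_ends LE that by blast
  fix z assume "z \<in> verts Hu"
  then consider x where "x \<in> verts H - {u}" "z = Inl x" | a where "a \<in> spokes" "z = Inr a"
    unfolding verts_Hu by blast
  then show "card {d \<in> ?L. z \<in># ends Hu d} = 1"
  proof cases
    case 1
    then have "{d \<in> ?L. z \<in># ends Hu d} = Inl ` {e \<in> M. x \<in># ends H e}"
      using Inl_in_ends_Hu_Inl Inl_notin_ends_Hu_Inr MH by auto
    moreover have "card {e \<in> M. x \<in># ends H e} = 1"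
      using pm 1 unfolding perfect_matching_def by blast
    ultimately show ?thesis
      by (simp add: card_image)
  next
    case 2
    have "{d \<in> ?L. z \<in># ends Hu d} = (if a = j then {Inl j} else {Inr (spokes - {j})})"
      using 2 Inr_in_ends_Hu_Inl[OF 2(1)] Inr_in_ends_Hu_Inr[OF sT] MH j by auto
    then show ?thesis
      by simp
  qed
qed

lemma pm_cover_inflate:
  obtains Ms where "pm_cover Hu Ms"
proof -
  obtain Ms where Ms: "pm_cover H Ms"
    using pm_cover_exists[OF cubic_H two_connected_H] by blast
  define J where "J M = (THE j. M \<inter> spokes = {j})" for M
  have J: "M \<inter> spokes = {J M}" if "M \<in> set Ms" for M
  proof -
    have "perfect_matching H M"
      using Ms that unfolding pm_cover_def by blast
    then obtain j where "M \<inter> spokes = {j}"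
      by (rule perfect_matching_Int_spokes)
    then show ?thesis
      unfolding J_def by simp
  qed
  define L where "L M = Inl ` M \<union> {Inr (spokes - {J M})}" for M
  have pL: "perfect_matching Hu (L M)" if "M \<in> set Ms" for M
    unfolding L_def using perfect_matching_inflate[OF _ J[OF that]] Ms that unfolding pm_cover_def
    by blast
  have cover: "d \<in> \<Union>(set (map L Ms))" if d: "d \<in> edges Hu" for d
  proof -
    consider e where "e \<in> edges H" "d = Inl e" | s where "s \<in> triangle" "d = Inr s"
      using d unfolding edges_Hu by blast
    then show ?thesis
    proof cases
      case 1
      then obtain M where "M \<in> set Ms" "e \<in> M"
        using Ms unfolding pm_cover_def by blast
      then show ?thesis
        using 1 unfolding L_def by auto
    next
      case 2
      obtain j where j: "j \<in> spokes" "s = spokes - {j}"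
        using triangle_eq_spokes_Diff[OF 2(1)] by blast
      then obtain M where M: "M \<in> set Ms" "j \<in> M"
        using Ms spoke(4) unfolding pm_cover_def by blast
      then have "j \<in> M \<inter> spokes"
        using j(1) by blast
      then have "J M = j"
        using J[OF M(1)] by auto
      then show ?thesis
        using M 2 j unfolding L_def by auto
    qed
  qed
  have "\<forall>M\<in>set (map L Ms). perfect_matching Hu M"
    using pL by simp
  then have "pm_cover Hu (map L Ms)"
    by (rule pm_coverI) (use cover in blast)
  then show ?thesis
    using that by blast
qed

end

section \<open>Perfect matchings of the 3-sum\<close>

definition proper_3_colouring :: "('v, 'e) mgraph \<Rightarrow> ('e \<Rightarrow> nat) \<Rightarrow> bool" where
  "proper_3_colouring G c \<longleftrightarrow>
     (\<forall>e\<in>edges G. c e < 3) \<and>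
     (\<forall>e\<in>edges G. \<forall>e'\<in>edges G. e \<noteq> e' \<and> (\<exists>x. x \<in># ends G e \<and> x \<in># ends G e') \<longrightarrow> c e \<noteq> c e')"

lemma colourable3_iff: "colourable3 G \<longleftrightarrow> (\<exists>c. proper_3_colouring G c) \<and>
    (\<forall>e\<in>edges G. \<forall>x. count (ends G e) x \<le> 1)"
  unfolding colourable3_def proper_3_colouring_def by blast

lemma proper_3_colouring_inj_on_at:
  "proper_3_colouring G c \<Longrightarrow> inj_on c (at G y)"
  unfolding proper_3_colouring_def at_def by (auto intro!: inj_onI)

lemma proper_3_colouring_at:
  assumes cub: "cubic G" and tc: "two_connected G" and c: "proper_3_colouring G c"
    and y: "y \<in> verts G" and \<gamma>: "\<gamma> < 3"
  obtains f where "f \<in> at G y" "c f = \<gamma>"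
proof -
  have inj: "inj_on c (at G y)"
    using proper_3_colouring_inj_on_at[OF c] .
  then have "card (c ` at G y) = 3"
    using card_image card_at_two_connected_cubic[OF cub tc y] by metis
  moreover have "c ` at G y \<subseteq> {..<3}"
    using c unfolding proper_3_colouring_def at_def by auto
  ultimately have "c ` at G y = {..<3}"
    by (simp add: card_subset_eq)
  then show ?thesis
    using that \<gamma> by (metis imageE lessThan_iff)
qed

locale three_sum = inflation H u
  for H :: "('v, 'e) mgraph" and u :: 'v +
  fixes K :: "('w, 'f) mgraph" and v :: 'w and phi :: "'e \<Rightarrow> 'f"
  assumes cubic_K: "cubic K" and two_connected_K: "two_connected K" and v: "v \<in> verts K"
    and phi: "bij_betw phi spokes (at K v)" and simple_at_v: "\<not> incident_parallel K v"
begin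

abbreviation G :: "('v + 'w, 'e + 'f) mgraph" where
  "G \<equiv> sum3 H K u v phi"

definition neighbour :: "'e \<Rightarrow> 'w" where
  "neighbour e = other K v (phi e)"

definition N :: "'w set" where
  "N = neighbour ` spokes"

definition W :: "'w set" where
  "W = verts K - {v} - N"

lemma wf_K: "wf_graph K"
  using cubic_K unfolding cubic_def by auto

lemma phi_spoke: "e \<in> spokes \<Longrightarrow> phi e \<in> at K v"
  using phi bij_betwE by blast

lemma ends_phi: "e \<in> spokes \<Longrightarrow> ends K (phi e) = {#v, neighbour e#}"
  using at_two_connected_cubic(1)[OF cubic_K two_connected_K phi_spoke] unfolding neighbour_def by simp

lemma neighbour: "e \<in> spokes \<Longrightarrow> neighbour e \<noteq> v \<and> neighbour e \<in> verts K"
  using at_two_connected_cubic(2,3)[OF cubic_K two_connected_K phi_spoke] unfolding neighbour_def by simp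

lemma phi_edge: "e \<in> spokes \<Longrightarrow> phi e \<in> edges K"
  using phi_spoke unfolding at_def by blast

lemma inj_on_nb: "inj_on neighbour spokes"
proof (rule inj_onI)
  fix e1 e2 assume e: "e1 \<in> spokes" "e2 \<in> spokes" "neighbour e1 = neighbour e2"
  then have "ends K (phi e1) = ends K (phi e2)"
    using ends_phi by simp
  moreover have "v \<in># ends K (phi e1)"
    using ends_phi[OF e(1)] by simp
  ultimately have "phi e1 = phi e2"
    using simple_at_v phi_edge[OF e(1)] phi_edge[OF e(2)] unfolding incident_parallel_def by blast
  then show "e1 = e2"
    using phi e(1,2) unfolding bij_betw_def by (meson inj_onD)
qed

lemma card_N: "card N = 3"
  unfolding N_def using card_image[OF inj_on_nb] card_spokes by simp

lemma finite_N: "finite N"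
  using card_N by (metis card.infinite zero_neq_numeral)

lemma N_subset: "N \<subseteq> verts K - {v}"
  unfolding N_def using neighbour by auto

lemma adj_v_in_N:
  assumes "adj K v y"
  shows "y \<in> N"
proof -
  obtain f where f: "f \<in> edges K" "ends K f = {#v, y#}"
    using assms unfolding adj_def by blast
  then have "f \<in> at K v"
    unfolding at_def by simp
  then obtain e where e: "e \<in> spokes" "f = phi e"
    using phi by (metis bij_betw_imp_surj_on imageE)
  then have "y = neighbour e"
    using ends_phi[OF e(1)] f by (simp add: pair_mset_eq_iff)
  then show ?thesis
    unfolding N_def using e by blast
qed

lemma verts_G: "verts G = Inl ` (verts H - {u}) \<union> Inr ` (verts K - {v})"
  unfolding sum3_def by simp

lemma edges_G: "edges G = Inl ` edges H \<union> Inr ` {f \<in> edges K. v \<notin># ends K f}"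
  unfolding sum3_def by simp

lemma ends_G_spoke: "e \<in> spokes \<Longrightarrow> ends G (Inl e) = {#Inl (other H u e), Inr (neighbour e)#}"
  unfolding sum3_def at_def neighbour_def by simp

lemma ends_G_non_spoke:
  "e \<notin> spokes \<Longrightarrow> e \<in> edges H \<Longrightarrow> ends G (Inl e) = image_mset Inl (ends H e)"
  using u_notin_ends unfolding sum3_def by simp

lemma ends_G_Inr: "ends G (Inr f) = image_mset Inr (ends K f)"
  unfolding sum3_def by simp

lemma Inl_in_ends_G_Inl:
  assumes "x \<noteq> u" "e \<in> edges H"
  shows "Inl x \<in># ends G (Inl e) \<longleftrightarrow> x \<in># ends H e"
  using assms spoke ends_G_spoke ends_G_non_spoke by (cases "e \<in> spokes") auto

lemma Inr_in_ends_G_Inl: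
  "e \<in> edges H \<Longrightarrow> Inr y \<in># ends G (Inl e) \<longleftrightarrow> e \<in> spokes \<and> neighbour e = y"
  using ends_G_spoke ends_G_non_spoke by (cases "e \<in> spokes") auto

lemma G_count_ends:
  assumes "d \<in> edges G"
  shows "count (ends G d) z \<le> 1"
proof (cases d)
  case (Inl e)
  then have e: "e \<in> edges H"
    using assms unfolding edges_G by auto
  show ?thesis
  proof (cases "e \<in> spokes")
    case True
    then show ?thesis
      using Inl ends_G_spoke by auto
  next
    case False
    obtain a b where "ends H e = {#a, b#}"
      using wf_graph_ends[OF wf_H e] by blast
    moreover have "a \<noteq> b"
      using two_connected_cubic_count_ends[OF cubic_H two_connected_H e, of a] calculation by auto
    ultimately show ?thesis
      using Inl ends_G_non_spoke[OF False e] by auto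
  qed
next
  case (Inr f)
  then have "f \<in> edges K"
    using assms unfolding edges_G by auto
  then obtain a b where ab: "ends K f = {#a, b#}"
    using wf_graph_ends[OF wf_K] by blast
  moreover have "a \<noteq> b"
    using two_connected_cubic_count_ends[OF cubic_K two_connected_K \<open>f \<in> edges K\<close>, of a] ab
    by auto
  ultimately show ?thesis
    using Inr ends_G_Inr by auto
qed

lemma perfect_matching_sum3I:
  assumes pm: "perfect_matching Hu M" and Q: "Q \<subseteq> {f \<in> edges K. v \<notin># ends K f}"
    and K_side: "\<And>y. y \<in> verts K - {v} \<Longrightarrow>
      card {e \<in> matched_spokes M. neighbour e = y} + card {f \<in> Q. y \<in># ends K f} = 1"
  shows "perfect_matching G (Inl ` base_edges M \<union> Inr ` Q)"
  unfolding perfect_matching_def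
proof (intro conjI ballI allI)
  let ?L = "Inl ` base_edges M \<union> Inr ` Q"
  have base: "base_edges M \<subseteq> edges H"
    using base_edges_subset[OF pm] .
  show LG: "?L \<subseteq> edges G"
    using base Q unfolding edges_G by blast
  show "count (ends G d) z \<le> 1" if "d \<in> ?L" for d z
    using G_count_ends LG that by blast
  fix z assume "z \<in> verts G"
  then consider x where "x \<in> verts H - {u}" "z = Inl x" | y where "y \<in> verts K - {v}" "z = Inr y"
    unfolding verts_G by blast
  then show "card {d \<in> ?L. z \<in># ends G d} = 1"
  proof cases
    case 1
    then have "{d \<in> ?L. z \<in># ends G d} = Inl ` {e \<in> base_edges M. x \<in># ends H e}"
      using base Inl_in_ends_G_Inl ends_G_Inr by auto
    then show ?thesis
      using card_base_edges_at[OF pm 1(1)] by (simp add: card_image)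
  next
    case 2
    have "{d \<in> ?L. z \<in># ends G d} = Inl ` {e \<in> base_edges M. Inr y \<in># ends G (Inl e)}
        \<union> Inr ` {f \<in> Q. Inr y \<in># ends G (Inr f)}"
      using 2(2) by auto
    also have "{e \<in> base_edges M. Inr y \<in># ends G (Inl e)} = {e \<in> matched_spokes M. neighbour e = y}"
      using base Inr_in_ends_G_Inl unfolding matched_spokes_def base_edges_def by auto
    also have "{f \<in> Q. Inr y \<in># ends G (Inr f)} = {f \<in> Q. y \<in># ends K f}"
      by (auto simp: ends_G_Inr)
    finally have "{d \<in> ?L. z \<in># ends G d} =
        {e \<in> matched_spokes M. neighbour e = y} <+> {f \<in> Q. y \<in># ends K f}"
      unfolding Plus_def .
    moreover have "finite {e \<in> matched_spokes M. neighbour e = y}"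
      using finite_spokes unfolding matched_spokes_def by simp
    moreover have "finite {f \<in> Q. y \<in># ends K f}"
      using Q wf_graph_finite(2)[OF wf_K] by (auto intro: finite_subset)
    ultimately show ?thesis
      using K_side[OF 2(1)] by (simp add: card_Plus)
  qed
qed

lemma K_side_colour_class:
  assumes c: "proper_3_colouring K c" and j: "j \<in> spokes" and y: "y \<in> verts K - {v}"
  shows "card {e \<in> {j}. neighbour e = y}
    + card {f \<in> {f \<in> edges K. c f = c (phi j) \<and> v \<notin># ends K f}. y \<in># ends K f} = 1"
proof -
  let ?Q = "{f \<in> {f \<in> edges K. c f = c (phi j) \<and> v \<notin># ends K f}. y \<in># ends K f}"
  have pj: "phi j \<in> at K v" "phi j \<in> edges K"
    using phi_spoke[OF j] phi_edge[OF j] .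
  have inj: "inj_on c (at K y)"
    using proper_3_colouring_inj_on_at[OF c] .
  have Q_at: "?Q = {f \<in> at K y. c f = c (phi j) \<and> v \<notin># ends K f}"
    unfolding at_def by auto
  show ?thesis
  proof (cases "y = neighbour j")
    case True
    have pj_y: "phi j \<in> at K y"
      using pj ends_phi[OF j] True unfolding at_def by simp
    have "f \<notin> ?Q" for f
    proof
      assume "f \<in> ?Q"
      then have f: "f \<in> at K y" "c f = c (phi j)" "v \<notin># ends K f"
        unfolding Q_at by auto
      have "f = phi j"
        using inj_onD[OF inj f(2) f(1) pj_y] .
      then show False
        using f(3) ends_phi[OF j] by simp
    qed
    then have "?Q = {}"
      by blast
    then have "card ?Q = 0"
      by (simp only: card.empty)
    moreover have "{e \<in> {j}. neighbour e = y} = {j}"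
      using True by auto
    ultimately show ?thesis
      by simp
  next
    case False
    have "c (phi j) < 3"
      using c pj(2) unfolding proper_3_colouring_def by blast
    then obtain g where g: "g \<in> at K y" "c g = c (phi j)"
      using proper_3_colouring_at[OF cubic_K two_connected_K c] y by blast
    have "v \<notin># ends K g"
    proof
      assume "v \<in># ends K g"
      then have "g \<in> at K v"
        using g(1) unfolding at_def by simp
      then have "g = phi j"
        using inj_onD[OF proper_3_colouring_inj_on_at[OF c] g(2) _ pj(1)] by simp
      then show False
        using g(1) ends_phi[OF j] False y unfolding at_def by auto
    qed
    then have "g \<in> ?Q"
      unfolding Q_at using g by simp
    moreover have "f = g" if "f \<in> ?Q" for f
    proof -
      have "f \<in> at K y" "c f = c g"
        using that g(2) unfolding Q_at by auto
      then show ?thesis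
        using inj_onD[OF inj _ _ g(1)] by simp
    qed
    ultimately have "?Q = {g}"
      by blast
    moreover have "{e \<in> {j}. neighbour e = y} = {}"
      using False by auto
    ultimately show ?thesis
      by simp
  qed
qed

lemma K_side_matching:
  assumes m: "perfect_matching_map (adj K) W m" and y: "y \<in> verts K - {v}"
  shows "card {e \<in> spokes. neighbour e = y} + card {f \<in> matching_edges K W m. y \<in># ends K f} = 1"
proof (cases "y \<in> N")
  case True
  then obtain e0 where e0: "e0 \<in> spokes" "y = neighbour e0"
    unfolding N_def by blast
  then have spokes_y: "{e \<in> spokes. neighbour e = y} = {e0}"
    using inj_on_nb unfolding inj_on_def by auto
  have "y \<notin># ends K f" if "f \<in> matching_edges K W m" for f
    using matching_edges_ends[OF m that] True unfolding W_def by auto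
  then have "{f \<in> matching_edges K W m. y \<in># ends K f} = {}"
    by blast
  then have "card {f \<in> matching_edges K W m. y \<in># ends K f} = 0"
    by (simp only: card.empty)
  then show ?thesis
    using spokes_y by simp
next
  case False
  then have "{e \<in> spokes. neighbour e = y} = {}"
    unfolding N_def by blast
  then have "card {e \<in> spokes. neighbour e = y} = 0"
    by (simp only: card.empty)
  moreover have "y \<in> W"
    using False y unfolding W_def by blast
  ultimately show ?thesis
    using matching_edges_at[OF m] by simp
qed

end

text \<open>The construction behind the bound on the perfect matching index of the 3-sum: each of the
  four perfect matchings of H^u is completed either by a perfect matching of K - v - N (when it uses
  all three spokes) or by a colour class of K (when it uses only the spoke j).\<close>
locale three_sum_completion = three_sum H u K v phi
  for H :: "('v, 'e) mgraph" and u :: 'v and K :: "('w, 'f) mgraph" and v :: 'w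
    and phi :: "'e \<Rightarrow> 'f" +
  fixes c :: "'f \<Rightarrow> nat" and m :: "'w \<Rightarrow> 'w"
  assumes colouring: "proper_3_colouring K c" and matching: "perfect_matching_map (adj K) W m"
begin

definition completion :: "('e + 'e set) set \<Rightarrow> 'f set" where
  "completion M = (if matched_spokes M = spokes then matching_edges K W m
     else {f \<in> edges K. c f = c (phi (THE j. matched_spokes M = {j})) \<and> v \<notin># ends K f})"

lemma completion_one_spoke:
  assumes "matched_spokes M = {j}"
  shows "completion M = {f \<in> edges K. c f = c (phi j) \<and> v \<notin># ends K f}"
proof -
  have "matched_spokes M \<noteq> spokes"
  proof
    assume "matched_spokes M = spokes"
    then have "spokes = {j}"
      using assms by simp
    then have "card spokes = 1"
      by simp
    then show False
      using card_spokes by simp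
  qed
  then show ?thesis
    unfolding completion_def using assms by simp
qed

lemma perfect_matching_completion:
  assumes pm: "perfect_matching Hu M"
  shows "perfect_matching G (Inl ` base_edges M \<union> Inr ` completion M)"
proof (cases "matched_spokes M = spokes")
  case True
  have "v \<notin># ends K f" if "f \<in> matching_edges K W m" for f
    using matching_edges_ends[OF matching that] unfolding W_def by auto
  then have "matching_edges K W m \<subseteq> {f \<in> edges K. v \<notin># ends K f}"
    using matching_edges_subset[OF matching] by blast
  then show ?thesis
    unfolding completion_def using True K_side_matching[OF matching]
    by (intro perfect_matching_sum3I[OF pm]) auto
next
  case False
  then obtain j where j: "j \<in> spokes" "matched_spokes M = {j}"
    using matched_spokes_cases[OF pm] by blast
  then show ?thesis
    unfolding completion_one_spoke[OF j(2)] using K_side_colour_class[OF colouring j(1)]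
    by (intro perfect_matching_sum3I[OF pm]) auto
qed

lemma edges_G_covered:
  assumes Ms: "pm_cover Hu Ms" and d: "d \<in> edges G"
  shows "\<exists>M\<in>set Ms. d \<in> Inl ` base_edges M \<union> Inr ` completion M"
proof -
  consider e where "e \<in> edges H" "d = Inl e" | f where "f \<in> edges K" "v \<notin># ends K f" "d = Inr f"
    using d unfolding edges_G by blast
  then show ?thesis
  proof cases
    case 1
    then have "Inl e \<in> edges Hu"
      unfolding edges_Hu by blast
    then obtain M where "M \<in> set Ms" "Inl e \<in> M"
      using Ms unfolding pm_cover_def by blast
    then show ?thesis
      using 1 unfolding base_edges_def by blast
  next
    case 2
    have "c f < 3"
      using colouring 2(1) unfolding proper_3_colouring_def by blast
    then obtain f' where f': "f' \<in> at K v" "c f' = c f"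
      using proper_3_colouring_at[OF cubic_K two_connected_K colouring v] by blast
    then obtain j where j: "j \<in> spokes" "f' = phi j"
      using phi by (metis bij_betw_imp_surj_on imageE)
    have sT: "spokes - {j} \<in> triangle"
      using spokes_Diff_in_triangle[OF j(1)] .
    then have "Inr (spokes - {j}) \<in> edges Hu"
      unfolding edges_Hu by blast
    then obtain M where M: "M \<in> set Ms" "Inr (spokes - {j}) \<in> M"
      using Ms unfolding pm_cover_def by blast
    then have "matched_spokes M = spokes - (spokes - {j})"
      using matched_spokes_triangle[OF _ sT] Ms unfolding pm_cover_def by blast
    then have "matched_spokes M = {j}"
      using j(1) by auto
    then have "f \<in> completion M"
      using completion_one_spoke j f' 2 by auto
    then show ?thesis
      using M 2(3) by blast
  qed
qed

lemma pm_index_sum3_le: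
  assumes Ms: "pm_cover Hu Ms"
  shows "pm_index G \<le> length Ms"
proof -
  let ?Ms' = "map (\<lambda>M. Inl ` base_edges M \<union> Inr ` completion M) Ms"
  have "pm_cover G ?Ms'"
  proof (rule pm_coverI)
    show "\<forall>M'\<in>set ?Ms'. perfect_matching G M'"
      using perfect_matching_completion Ms unfolding pm_cover_def by auto
    show "edges G \<subseteq> \<Union>(set ?Ms')"
      using edges_G_covered[OF Ms] by fastforce
  qed
  then show ?thesis
    using pm_index_le by fastforce
qed

end

context three_sum
begin

lemma not_tutte_condition_W:
  assumes apex: "pm_index Hu = 4" and col: "colourable3 K" and G5: "pm_index G \<ge> 5"
  shows "\<not> tutte_condition (adj K) W"
proof
  assume tutte: "tutte_condition (adj K) W"
  have "finite W"
    unfolding W_def using wf_graph_finite(1)[OF wf_K] by simp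
  then obtain m where m: "perfect_matching_map (adj K) W m"
    using tutte_perfect_matching_map[OF symp_adj _ tutte] by blast
  obtain c where c: "proper_3_colouring K c"
    using col unfolding colourable3_iff by blast
  interpret three_sum_completion H u K v phi c m
    using three_sum_completion.intro[OF three_sum_axioms three_sum_completion_axioms.intro[OF c m]] .
  obtain Ms0 where "pm_cover Hu Ms0"
    using pm_cover_inflate by blast
  then obtain Ms where Ms: "pm_cover Hu Ms" "length Ms = pm_index Hu"
    by (rule pm_index_attained)
  have "pm_index G \<le> 4"
    using pm_index_sum3_le[OF Ms(1)] Ms(2) apex by simp
  then show False
    using G5 by simp
qed

end

section \<open>Contraction and the barrier\<close>

locale contraction =
  fixes K :: "('v, 'e) mgraph" and U :: "'v set"
  assumes cubic_K: "cubic K" and U: "U \<subseteq> verts K"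
    and no_edge_in_U: "\<forall>e\<in>edges K. \<not> set_mset (ends K e) \<subseteq> U"
begin

abbreviation Z :: "'v set" where
  "Z \<equiv> verts K - U"

lemma wf_K: "wf_graph K"
  using cubic_K unfolding cubic_def by auto

lemma comps_del_U: "comps (del_verts K U) = components (adj K) Z"
  using comps_del_verts[OF wf_K] .

lemma verts_contract: "verts (contract K U) = Inl ` U \<union> Inr ` components (adj K) Z"
  by (simp add: contract_def comps_del_U)

lemma edges_contract:
  "edges (contract K U) = {e \<in> edges K. \<not> (\<exists>C\<in>components (adj K) Z. set_mset (ends K e) \<subseteq> C)}"
  by (simp add: contract_def comps_del_U)

lemma edges_contract_iff:
  "e \<in> edges (contract K U) \<longleftrightarrow> e \<in> edges K \<and> (\<exists>a b. ends K e = {#a, b#} \<and> a \<in> U \<and> b \<in> Z)"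
proof
  assume e: "e \<in> edges (contract K U)"
  then have eE: "e \<in> edges K" and nC: "\<not> (\<exists>C\<in>components (adj K) Z. set_mset (ends K e) \<subseteq> C)"
    unfolding edges_contract by auto
  obtain a b where ab: "ends K e = {#a, b#}" "a \<in> verts K" "b \<in> verts K"
    using wf_graph_ends[OF wf_K eE] by blast
  have "\<not> (a \<in> U \<and> b \<in> U)"
    using no_edge_in_U eE ab by auto
  moreover have "\<not> (a \<in> Z \<and> b \<in> Z)"
  proof
    assume abZ: "a \<in> Z \<and> b \<in> Z"
    have C: "component (adj K) Z a \<in> components (adj K) Z"
      using component_in_components[of a Z "adj K"] abZ by blast
    have aC: "a \<in> component (adj K) Z a"
      using component_self[of a Z "adj K"] abZ by blast
    have "adj K a b"
      unfolding adj_def using eE ab by blast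
    then have "b \<in> component (adj K) Z a"
      using components_closed[OF symp_adj C aC] abZ by blast
    then have "set_mset (ends K e) \<subseteq> component (adj K) Z a"
      using ab(1) aC by simp
    then show False
      using nC C by blast
  qed
  ultimately have "a \<in> U \<and> b \<in> Z \<or> b \<in> U \<and> a \<in> Z"
    using ab by blast
  moreover have "ends K e = {#b, a#}"
    using ab(1) by (simp add: add_mset_commute)
  ultimately show "e \<in> edges K \<and> (\<exists>a b. ends K e = {#a, b#} \<and> a \<in> U \<and> b \<in> Z)"
    using ab(1) eE by blast
next
  assume "e \<in> edges K \<and> (\<exists>a b. ends K e = {#a, b#} \<and> a \<in> U \<and> b \<in> Z)"
  then obtain a b where ab: "e \<in> edges K" "ends K e = {#a, b#}" "a \<in> U" "b \<in> Z"
    by blast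
  then have "\<not> set_mset (ends K e) \<subseteq> C" if "C \<in> components (adj K) Z" for C
    using components_subset[OF that] by auto
  then show "e \<in> edges (contract K U)"
    unfolding edges_contract using ab(1) by blast
qed

lemma ends_contract:
  assumes "ends K e = {#a, b#}" "a \<in> U" "b \<in> Z"
  shows "ends (contract K U) e = {#Inl a, Inr (component (adj K) Z b)#}"
  using assms comp_of_del_verts[OF wf_K] unfolding contract_def by simp

lemma deg_contract_Inl:
  assumes a: "a \<in> U"
  shows "deg (contract K U) (Inl a) = 3"
proof -
  have "deg (contract K U) (Inl a) = (\<Sum>e\<in>edges (contract K U). count (ends K e) a)"
    unfolding deg_def
  proof (rule sum.cong[OF refl])
    fix e assume "e \<in> edges (contract K U)"
    then obtain a' b where ab: "ends K e = {#a', b#}" "a' \<in> U" "b \<in> Z"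
      using edges_contract_iff by blast
    then show "count (ends (contract K U) e) (Inl a) = count (ends K e) a"
      using ends_contract[OF ab] a by auto
  qed
  also have "\<dots> = (\<Sum>e\<in>edges K. count (ends K e) a)"
  proof (rule sum.mono_neutral_left)
    show "finite (edges K)"
      using wf_graph_finite(2)[OF wf_K] .
    show "edges (contract K U) \<subseteq> edges K"
      using edges_contract_iff by blast
    show "\<forall>e\<in>edges K - edges (contract K U). count (ends K e) a = 0"
    proof
      fix e assume e: "e \<in> edges K - edges (contract K U)"
      obtain p q where pq: "ends K e = {#p, q#}" "p \<in> verts K" "q \<in> verts K"
        using wf_graph_ends[OF wf_K] e by blast
      have nE: "\<not> (\<exists>a b. ends K e = {#a, b#} \<and> a \<in> U \<and> b \<in> Z)"
        using e edges_contract_iff by blast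
      have pq': "ends K e = {#q, p#}"
        using pq(1) by (simp add: add_mset_commute)
      have "\<not> (p \<in> U \<and> q \<in> U)"
        using no_edge_in_U e pq(1) by auto
      then have "p \<notin> U" "q \<notin> U"
        using nE pq pq' by blast+
      then show "count (ends K e) a = 0"
        using pq a by auto
    qed
  qed
  also have "\<dots> = 3"
    using cubic_K a U unfolding cubic_def deg_def by auto
  finally show ?thesis .
qed

lemma finite_edges_contract: "finite (edges (contract K U))"
  unfolding edges_contract using wf_graph_finite(2)[OF wf_K] by simp

lemma deg_contract_Inr:
  assumes C: "C \<in> components (adj K) Z"
  shows "deg (contract K U) (Inr C) = card (boundary K C)"
proof -
  have CZ: "C \<subseteq> Z"
    using components_subset[OF C] .
  have "count (ends (contract K U) e) (Inr C) = (if e \<in> boundary K C then 1 else 0)"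
    if e: "e \<in> edges (contract K U)" for e
  proof -
    obtain a b where ab: "ends K e = {#a, b#}" "a \<in> U" "b \<in> Z"
      using e edges_contract_iff by blast
    have "component (adj K) Z b = C \<longleftrightarrow> b \<in> C"
      using components_eq_component[OF symp_adj C, of b] component_self[OF ab(3), of "adj K"]
      by auto
    moreover have "e \<in> boundary K C \<longleftrightarrow> b \<in> C"
      unfolding boundary_def using ab CZ e edges_contract_iff by auto
    ultimately show ?thesis
      using ends_contract[OF ab] by auto
  qed
  then have "deg (contract K U) (Inr C) = (\<Sum>e\<in>edges (contract K U). if e \<in> boundary K C then 1 else 0)"
    unfolding deg_def by (rule sum.cong[OF refl])
  also have "\<dots> = card {e \<in> edges (contract K U). e \<in> boundary K C}"
    using sum.inter_filter[OF finite_edges_contract, of "\<lambda>_. 1::nat" "\<lambda>e. e \<in> boundary K C"]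
    by simp
  also have "{e \<in> edges (contract K U). e \<in> boundary K C} = boundary K C"
  proof -
    have "e \<in> edges (contract K U)" if e: "e \<in> boundary K C" for e
    proof -
      obtain a b where ab: "ends K e = {#a, b#}" "a \<in> C" "b \<notin> Z"
        using boundary_component[OF wf_K C e] by blast
      moreover have "e \<in> edges K"
        using e unfolding boundary_def by simp
      moreover have "b \<in> verts K"
        using wf_K calculation unfolding wf_graph_def by auto
      moreover have "ends K e = {#b, a#}"
        using ab(1) by (simp add: add_mset_commute)
      ultimately show ?thesis
        using edges_contract_iff CZ by blast
    qed
    then show ?thesis
      by blast
  qed
  finally show ?thesis .
qed

lemma wf_contract: "wf_graph (contract K U)"
  unfolding wf_graph_def
proof (intro conjI ballI)
  show "finite (verts (contract K U))"
    unfolding verts_contract using finite_subset[OF U wf_graph_finite(1)[OF wf_K]]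
      wf_graph_finite(1)[OF wf_K] by (simp add: finite_components)
  show "finite (edges (contract K U))"
    by (rule finite_edges_contract)
next
  fix e assume "e \<in> edges (contract K U)"
  then obtain a b where ab: "ends K e = {#a, b#}" "a \<in> U" "b \<in> Z"
    using edges_contract_iff by blast
  then show "size (ends (contract K U) e) = 2"
    using ends_contract by simp
  show "set_mset (ends (contract K U) e) \<subseteq> verts (contract K U)"
    using ends_contract[OF ab] ab component_in_components[OF ab(3)]
    unfolding verts_contract by auto
qed

lemma bipartising_setI:
  assumes U2: "card U \<ge> 2"
    and boundary3: "\<forall>C\<in>components (adj K) Z. card (boundary K C) = 3"
  shows "bipartising_set K U"
  unfolding bipartising_set_def
proof (intro conjI ballI)
  show "independent K U"
    unfolding independent_def using U no_edge_in_U by blast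
  show "card U \<ge> 2"
    by fact
  have "U \<noteq> {}"
    using U2 by auto
  then have "verts (contract K U) \<noteq> {}"
    unfolding verts_contract by blast
  moreover have "deg (contract K U) z = 3" if "z \<in> verts (contract K U)" for z
    using that boundary3 unfolding verts_contract by (auto simp: deg_contract_Inl deg_contract_Inr)
  ultimately show "cubic (contract K U)"
    unfolding cubic_def using wf_contract by blast
next
  fix e assume "e \<in> edges (contract K U)"
  then obtain a b where ab: "ends K e = {#a, b#}" "a \<in> U" "b \<in> Z"
    using edges_contract_iff by blast
  then show "\<exists>a\<in>U. \<exists>C\<in>comps (del_verts K U). ends (contract K U) e = {#Inl a, Inr C#}"
    using ends_contract[OF ab] component_in_components[OF ab(3)] comps_del_U by auto
qed

end

lemma all_eq_if_sum_le_card: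
  fixes f :: "'a \<Rightarrow> nat"
  assumes fin: "finite F" and ge: "\<forall>x\<in>F. f x \<ge> k" and sum: "sum f F \<le> k * card F"
  shows "\<forall>x\<in>F. f x = k"
proof (rule ccontr)
  assume "\<not> ?thesis"
  then obtain x0 where x0: "x0 \<in> F" "f x0 \<noteq> k"
    by blast
  then have "f x0 \<ge> k + 1"
    using ge by fastforce
  moreover have "sum f (F - {x0}) \<ge> (\<Sum>x\<in>F - {x0}. k)"
    using ge by (intro sum_mono) auto
  moreover have "(\<Sum>x\<in>F - {x0}. k) = k * (card F - 1)"
    using x0 fin by simp
  moreover have "card F \<ge> 1"
    using x0 fin by (metis One_nat_def Suc_leI card_gt_0_iff empty_iff)
  moreover have "sum f F = f x0 + sum f (F - {x0})"
    using sum.remove[OF fin x0(1)] .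
  ultimately have "sum f F \<ge> k * card F + 1"
    by (simp add: algebra_simps)
  then show False
    using sum by simp
qed

text \<open>The counting argument: with
  U = S \<union> N and Y = U + v, the set Y has at most 3|S| + 6 boundary edges, while the components of
  K - Y, of which at least |S| + 2 are odd, need at least two boundary edges each and three if odd.
  So all inequalities are tight.\<close>
locale three_sum_barrier = three_sum H u K v phi
  for H :: "('v, 'e) mgraph" and u :: 'v and K :: "('w, 'f) mgraph" and v :: 'w
    and phi :: "'e \<Rightarrow> 'f" +
  fixes S :: "'w set"
  assumes S: "S \<subseteq> W" and violation: "num_odd_components (adj K) (W - S) > card S"
begin

abbreviation U :: "'w set" where
  "U \<equiv> S \<union> N"

abbreviation Y :: "'w set" where
  "Y \<equiv> insert v U"

abbreviation barrier_components :: "'w set set" where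
  "barrier_components \<equiv> components (adj K) (W - S)"

lemma finite_verts_K: "finite (verts K)"
  using wf_graph_finite(1)[OF wf_K] .

lemma U_subset: "U \<subseteq> verts K"
  using S N_subset unfolding W_def by blast

lemma v_notin_U: "v \<notin> U"
  using S N_subset unfolding W_def by blast

lemma Y_subset: "Y \<subseteq> verts K"
  using U_subset v by blast

lemma card_Y: "card Y = card S + 4"
proof -
  have "finite S" "S \<inter> N = {}"
    using finite_subset[OF _ finite_verts_K] U_subset S unfolding W_def by auto
  then show ?thesis
    using v_notin_U finite_N card_N by (simp add: card_Un_disjoint)
qed

lemma W_Diff_S: "W - S = verts K - Y"
  unfolding W_def by blast

lemma finite_barrier_components: "finite barrier_components"
  using finite_verts_K unfolding W_def by (simp add: finite_components)

lemma num_odd_components_ge: "num_odd_components (adj K) (W - S) \<ge> card S + 2"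
proof -
  have "card (verts K - Y) = card (verts K) - (card S + 4)"
    using card_Diff_subset[OF finite_subset[OF Y_subset finite_verts_K] Y_subset] card_Y by simp
  moreover have "card S + 4 \<le> card (verts K)"
    using card_mono[OF finite_verts_K Y_subset] card_Y by simp
  ultimately have "even (num_odd_components (adj K) (W - S)) \<longleftrightarrow> even (card S)"
    using even_num_odd_components_iff[OF symp_adj, of "verts K - Y"] finite_verts_K W_Diff_S
      even_card_verts[OF cubic_K] by (simp add: even_diff_nat)
  moreover have "s + 2 \<le> k" if "even k \<longleftrightarrow> even s" "s < k" for k s :: nat
    using that by presburger
  ultimately show ?thesis
    using violation by blast
qed

lemma at_v_Un_inner_edges_U: "at K v \<union> inner_edges K U \<subseteq> inner_edges K Y"
proof
  fix e assume "e \<in> at K v \<union> inner_edges K U"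
  then consider "e \<in> at K v" | "e \<in> inner_edges K U"
    by blast
  then show "e \<in> inner_edges K Y"
  proof cases
    case 1
    then have "ends K e = {#v, other K v e#}" "e \<in> edges K"
      using at_two_connected_cubic[OF cubic_K two_connected_K] by auto
    moreover have "other K v e \<in> N"
      using adj_v_in_N calculation unfolding adj_def by blast
    ultimately show ?thesis
      unfolding inner_edges_def by simp
  next
    case 2
    then have "e \<in> edges K" "ends_in U (ends K e) = 2"
      unfolding inner_edges_def by auto
    moreover obtain p q where "ends K e = {#p, q#}"
      using wf_graph_ends[OF wf_K calculation(1)] by blast
    ultimately show ?thesis
      unfolding inner_edges_def by (auto split: if_splits)
  qed
qed

lemma boundary_Y_bound: "card (boundary K Y) + 2 * card (inner_edges K U) \<le> 3 * card S + 6"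
proof -
  have "e \<notin> inner_edges K U" if "e \<in> at K v" for e
    using at_two_connected_cubic(1)[OF cubic_K two_connected_K that] v_notin_U
    unfolding inner_edges_def by auto
  then have disj: "at K v \<inter> inner_edges K U = {}"
    by blast
  have card_at: "card (at K v) = 3"
    using card_at_two_connected_cubic[OF cubic_K two_connected_K v] .
  then have "finite (at K v)"
    by (metis card.infinite zero_neq_numeral)
  then have "card (at K v \<union> inner_edges K U) = 3 + card (inner_edges K U)"
    using card_Un_disjoint[OF _ finite_inner_edges[OF wf_K] disj] card_at by simp
  then have "3 + card (inner_edges K U) \<le> card (inner_edges K Y)"
    using card_mono[OF finite_inner_edges[OF wf_K] at_v_Un_inner_edges_U] by simp
  then show ?thesis
    using cubic_card_boundary[OF cubic_K Y_subset] card_Y by simp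
qed

lemma card_boundary_barrier_component:
  assumes C: "C \<in> barrier_components"
  shows "(if odd (card C) then 3 else 2) \<le> card (boundary K C)"
proof -
  have CV: "C \<subseteq> verts K" "C \<noteq> {}" "verts K - C \<noteq> {}"
    using components_subset[OF C] components_nonempty[OF C] v unfolding W_def by auto
  show ?thesis
    using card_boundary_ge_2[OF two_connected_K CV wf_K] card_boundary_ge_3[OF cubic_K two_connected_K CV]
    by simp
qed

lemma sum_boundary_barrier_components:
  "(\<Sum>C\<in>barrier_components. card (boundary K C)) = card (boundary K Y)"
  unfolding W_Diff_S using sum_card_boundary_components[OF wf_K Y_subset] .

lemma boundary_Y_ge:
  "2 * card barrier_components + num_odd_components (adj K) (W - S) \<le> card (boundary K Y)"
proof -
  let ?cs = barrier_components
  have "(\<Sum>C\<in>?cs. if odd (card C) then 1 else 0) = card {C \<in> ?cs. odd (card C)}"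
    using sum.inter_filter[OF finite_barrier_components, of "\<lambda>_. 1::nat" "\<lambda>C. odd (card C)"]
    by simp
  then have "2 * card ?cs + num_odd_components (adj K) (W - S)
      = (\<Sum>C\<in>?cs. 2) + (\<Sum>C\<in>?cs. if odd (card C) then 1 else 0)"
    unfolding num_odd_components_def by (simp add: mult.commute)
  also have "\<dots> = (\<Sum>C\<in>?cs. 2 + (if odd (card C) then 1 else 0))"
    by (rule sum.distrib[symmetric])
  also have "\<dots> = (\<Sum>C\<in>?cs. if odd (card C) then 3 else 2)"
    by (rule sum.cong) auto
  also have "\<dots> \<le> (\<Sum>C\<in>?cs. card (boundary K C))"
    using card_boundary_barrier_component by (rule sum_mono)
  finally show ?thesis
    unfolding sum_boundary_barrier_components .
qed

lemma barrier_tight: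
  shows inner_edges_U: "inner_edges K U = {}"
    and card_boundary_barrier_components: "\<forall>C\<in>barrier_components. card (boundary K C) = 3"
proof -
  let ?cs = barrier_components
  have "num_odd_components (adj K) (W - S) \<le> card ?cs"
    unfolding num_odd_components_def using finite_barrier_components by (intro card_mono) auto
  then have inner: "card (inner_edges K U) = 0"
    and all_odd: "num_odd_components (adj K) (W - S) = card ?cs"
    and sum3: "(\<Sum>C\<in>?cs. card (boundary K C)) \<le> 3 * card ?cs"
    using boundary_Y_ge boundary_Y_bound num_odd_components_ge sum_boundary_barrier_components
    by linarith+
  show "inner_edges K U = {}"
    using inner finite_inner_edges[OF wf_K] by simp
  have "{C \<in> ?cs. odd (card C)} \<subseteq> ?cs"
    by blast
  then have odd: "{C \<in> ?cs. odd (card C)} = ?cs"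
    using card_subset_eq[OF finite_barrier_components] all_odd unfolding num_odd_components_def
    by blast
  have "\<forall>C\<in>?cs. card (boundary K C) \<ge> 3"
  proof
    fix C assume C: "C \<in> ?cs"
    then have "odd (card C)"
      using odd by blast
    then show "card (boundary K C) \<ge> 3"
      using card_boundary_barrier_component[OF C] by simp
  qed
  then show "\<forall>C\<in>?cs. card (boundary K C) = 3"
    using all_eq_if_sum_le_card[OF finite_barrier_components _ sum3] by blast
qed

lemma components_Diff_U: "components (adj K) (verts K - U) = insert {v} barrier_components"
proof -
  let ?Z = "verts K - U"
  have vZ: "v \<in> ?Z"
    using v v_notin_U by blast
  have "component (adj K) ?Z v = component (adj K) {v} v"
    using vZ adj_v_in_N by (intro component_restrict) auto
  also have "\<dots> = {v}"
    unfolding component_def by auto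
  finally have vC: "{v} \<in> components (adj K) ?Z"
    using component_in_components[OF vZ] by metis
  have "W - S = ?Z - {v}"
    unfolding W_def by blast
  then have "barrier_components = components (adj K) ?Z - {{v}}"
    using components_Diff_subset[OF symp_adj vC, of "{v}"] by (simp add: components_def)
  then show ?thesis
    using vC by blast
qed

lemma card_boundary_v: "card (boundary K {v}) = 3"
proof -
  have "e \<notin> inner_edges K {v}" for e
  proof
    assume e: "e \<in> inner_edges K {v}"
    then have eE: "e \<in> edges K" and two: "ends_in {v} (ends K e) = 2"
      unfolding inner_edges_def by auto
    obtain p q where "ends K e = {#p, q#}"
      using wf_graph_ends[OF wf_K eE] by blast
    then have "count (ends K e) v = 2"
      using two by (auto split: if_splits)
    then show False
      using two_connected_cubic_count_ends[OF cubic_K two_connected_K eE, of v] by simp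
  qed
  then have "inner_edges K {v} = {}"
    by blast
  then show ?thesis
    using cubic_card_boundary[OF cubic_K, of "{v}"] v by simp
qed

lemma bipartising_set_U: "bipartising_set K U"
proof -
  have no_edge: "\<forall>e\<in>edges K. \<not> set_mset (ends K e) \<subseteq> U"
  proof (intro ballI notI)
    fix e assume e: "e \<in> edges K" "set_mset (ends K e) \<subseteq> U"
    obtain p q where "ends K e = {#p, q#}"
      using wf_graph_ends[OF wf_K e(1)] by blast
    then have "e \<in> inner_edges K U"
      using e unfolding inner_edges_def by simp
    then show False
      using inner_edges_U by blast
  qed
  interpret contraction K U
    using contraction.intro[OF cubic_K U_subset no_edge] .
  have "finite U"
    using finite_subset[OF U_subset finite_verts_K] .
  then have "card U \<ge> 2"
    using card_mono[OF _ Un_upper2, of S N] card_N by simp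
  moreover have "\<forall>C\<in>components (adj K) Z. card (boundary K C) = 3"
    using components_Diff_U card_boundary_v card_boundary_barrier_components by auto
  ultimately show ?thesis
    by (rule bipartising_setI)
qed

lemma singleton_v_in_comps: "{v} \<in> comps (del_verts K U)"
  using components_Diff_U comps_del_verts[OF wf_K] by simp

end

theorem theorem6p9:
  fixes H :: "('v, 'e) mgraph" and K :: "('w, 'f) mgraph"
    and u :: 'v and v :: 'w and phi :: "'e \<Rightarrow> 'f"
  assumes "cubic H" and "two_connected H" and "cubic K" and "two_connected K"
    and "u \<in> verts H" and "v \<in> verts K"
    and "bij_betw phi (at H u) (at K v)"
    and "\<not> dipole3 H" and "\<not> dipole3 K"
    and "\<not> incident_parallel H u" and "\<not> incident_parallel K v"
    and "pm_index H \<ge> 5" and "colourable3 K" and "apex H u"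
    and "pm_index (sum3 H K u v phi) \<ge> 5"
  shows "quasi_bipartite K \<and>
         (\<exists>U. bipartising_set K U \<and> {v} \<in> comps (del_verts K U))"
proof -
  have sum: "three_sum H u K v phi"
    using three_sum.intro[OF inflation.intro[OF assms(1,2,5)] three_sum_axioms.intro[OF assms(3,4,6,7,11)]] .
  then interpret three_sum H u K v phi .
  have "pm_index (inflate H u) = 4"
    using \<open>apex H u\<close> unfolding apex_def by blast
  then have "\<not> tutte_condition (adj K) W"
    using not_tutte_condition_W[OF _ assms(13,15)] by blast
  then obtain S where "S \<subseteq> W" "num_odd_components (adj K) (W - S) > card S"
    unfolding tutte_condition_def by auto
  then interpret three_sum_barrier H u K v phi S
    using three_sum_barrier.intro[OF sum three_sum_barrier_axioms.intro] by blast
  show ?thesis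
    unfolding quasi_bipartite_def using assms(3,4) bipartising_set_U singleton_v_in_comps by blast
qed

end
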